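(* Let $\mathbf{k}$ be an algebraically closed field with $\mathrm{char}(\mathbf{k})\neq 2$ and let $E=\bigwedge E_1$ be the exterior algebra of a $5$-dimensional $\mathbf{k}$-vector space $E_1$. Let $I\subseteq E$ be a homogeneous ideal such that $E/I$ has Hilbert function $(1,5,7,2)$. If $I$ contains no pencil of rank-$2$ quadrics, then $I_2\subseteq\bigwedge^2V\subseteq E_2$ for some $4$-dimensional subspace $V\subseteq E_1$.
   Context: A quadric $q\in E_2$ is identified with a $5\times 5$ skew-symmetric matrix; its rank is the rank of this matrix (always even). Rank $2$ means $q=\ell_1\wedge\ell_2$ with $\ell_1,\ell_2\in E_1$ linearly independent. A pencil of quadrics is a $2$-dimensional subspace of $E_2$; a pencil of rank-$2$ quadrics is one all of whose nonzero elements have rank $2$. *)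

theory Defs
  imports Main "HOL-Library.Function_Algebras" "HOL-Computational_Algebra.Polynomial"
begin

text \<open>The exterior algebra E of a 5-dimensional k-vector space E_1 with basis
  e_0,...,e_4 is modelled concretely: an element is a coefficient function
  on subsets S of {0..<5}, the coefficient of the basis monomial e_S
  (wedge of the e_i, i in S, in increasing order).\<close>

type_synonym 'a ext = "nat set \<Rightarrow> 'a"

definition scaleE :: "'a::field \<Rightarrow> 'a ext \<Rightarrow> 'a ext" where
  "scaleE c f = (\<lambda>S. c * f S)"

definition extAlg :: "'a::field ext set" where
  "extAlg = {f. \<forall>S. f S \<noteq> 0 \<longrightarrow> S \<subseteq> {0..<5}}"

definition grade :: "nat \<Rightarrow> 'a::field ext set" where
  "grade d = {f. \<forall>S. f S \<noteq> 0 \<longrightarrow> S \<subseteq> {0..<5} \<and> card S = d}"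

definition homog_part :: "nat \<Rightarrow> 'a::field ext \<Rightarrow> 'a ext" where
  "homog_part d f = (\<lambda>S. if card S = d then f S else 0)"

text \<open>Sign of e_S wedge e_T for disjoint S, T.\<close>
definition wsign :: "nat set \<Rightarrow> nat set \<Rightarrow> 'a::field" where
  "wsign S T = (-1) ^ card {(s, t). s \<in> S \<and> t \<in> T \<and> t < s}"

definition wedge :: "'a::field ext \<Rightarrow> 'a ext \<Rightarrow> 'a ext" where
  "wedge f g = (\<lambda>U. if U \<subseteq> {0..<5}
      then (\<Sum>S\<in>Pow U. f S * g (U - S) * wsign S (U - S)) else 0)"

definition homogeneous_ideal :: "'a::field ext set \<Rightarrow> bool" where
  "homogeneous_ideal I \<longleftrightarrow>
     I \<subseteq> extAlg \<and> ((\<lambda>S. 0) \<in> I) \<and>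
     (\<forall>f\<in>I. \<forall>g\<in>I. (\<lambda>S. f S + g S) \<in> I) \<and>
     (\<forall>c f. f \<in> I \<longrightarrow> scaleE c f \<in> I) \<and>
     (\<forall>f\<in>I. \<forall>g\<in>extAlg. wedge g f \<in> I \<and> wedge f g \<in> I) \<and>
     (\<forall>f\<in>I. \<forall>d. homog_part d f \<in> I)"

definition hilbert_fun :: "'a::field ext set \<Rightarrow> nat \<Rightarrow> nat" where
  "hilbert_fun I d =
     vector_space.dim (scaleE :: 'a \<Rightarrow> _) (grade d) - vector_space.dim (scaleE :: 'a \<Rightarrow> _) (I \<inter> grade d)"

definition rank2_quadric :: "'a::field ext \<Rightarrow> bool" where
  "rank2_quadric q \<longleftrightarrow>
     (\<exists>l1 l2. l1 \<in> grade 1 \<and> l2 \<in> grade 1 \<and>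
        \<not> module.dependent (scaleE :: 'a \<Rightarrow> _) {l1, l2} \<and> l1 \<noteq> l2 \<and>
        q = wedge l1 l2)"

definition pencil :: "'a::field ext set \<Rightarrow> bool" where
  "pencil P \<longleftrightarrow> P \<subseteq> grade 2 \<and> module.subspace (scaleE :: 'a \<Rightarrow> _) P \<and>
     vector_space.dim (scaleE :: 'a \<Rightarrow> _) P = 2"

definition rank2_pencil :: "'a::field ext set \<Rightarrow> bool" where
  "rank2_pencil P \<longleftrightarrow> pencil P \<and> (\<forall>q\<in>P. q \<noteq> 0 \<longrightarrow> rank2_quadric q)"

definition wedge2 :: "'a::field ext set \<Rightarrow> 'a ext set" where
  "wedge2 V = module.span (scaleE :: 'a \<Rightarrow> _) {wedge v w | v w. v \<in> V \<and> w \<in> V}"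

definition alg_closed :: "'a::field itself \<Rightarrow> bool" where
  "alg_closed _ \<longleftrightarrow> (\<forall>p :: 'a poly. degree p > 0 \<longrightarrow> (\<exists>x. poly p x = 0))"

end

theory Submission
  imports Defs
begin

(* Let W = I\<^sub>2 (of dimension 3) and T = I\<^sub>3 (of dimension 8). The wedge pairing
   E\<^sub>2 \<times> E\<^sub>3 \<rightarrow> E\<^sub>5 is perfect, so the annihilator A of T in E\<^sub>2 has dimension at least 2,
   and since l \<wedge> q \<in> T for all l \<in> E\<^sub>1, q \<in> W, every p \<in> A satisfies p \<wedge> q = 0 on W.

   If some p \<in> A has p \<wedge> p \<noteq> 0, then p \<wedge> p \<in> E\<^sub>4 \<cong> E\<^sub>1\<^sup>* cuts out a hyperplane V, and the
   coordinate identity \<iota>\<^bsub>p\<wedge>p\<^esub> q = -2 \<iota>\<^bsub>p\<wedge>q\<^esub> p shows that every q \<in> W is killed by the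
   contraction with p \<wedge> p, i.e. lies in \<Lambda>\<^sup>2 V.

   Otherwise all elements of A are decomposable (here char \<noteq> 2 is used), so two independent
   p\<^sub>1, p\<^sub>2 \<in> A share a linear factor: p\<^sub>1 = x \<wedge> b, p\<^sub>2 = x \<wedge> c. Then x \<wedge> W lies on the line
   through x \<wedge> b \<wedge> c, so the kernel of x \<wedge> - on W has dimension at least 2, and it is a pencil
   of rank-2 quadrics x \<wedge> m contained in I. *)

lemma vector_space_scaleE: "vector_space (scaleE :: 'a::field \<Rightarrow> 'a ext \<Rightarrow> 'a ext)"
  by unfold_locales (simp_all add: scaleE_def fun_eq_iff distrib_left distrib_right mult.assoc)

interpretation E: vector_space "scaleE :: 'a::field \<Rightarrow> 'a ext \<Rightarrow> 'a ext"
  by (rule vector_space_scaleE)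

lemma vector_space_mult: "vector_space ((*) :: 'a::field \<Rightarrow> 'a \<Rightarrow> 'a)"
  by unfold_locales (simp_all add: distrib_left distrib_right mult.assoc)

interpretation Ek: vector_space_pair "scaleE :: 'a::field \<Rightarrow> 'a ext \<Rightarrow> 'a ext" "(*) :: 'a \<Rightarrow> 'a \<Rightarrow> 'a"
  by (intro vector_space_pair.intro vector_space_scaleE vector_space_mult)

lemma scaleE_apply[simp]: "scaleE c f S = c * f S"
  by (simp add: scaleE_def)

abbreviation top5 :: "nat set" where "top5 \<equiv> {0..<5}"

definition basis_vec :: "nat \<Rightarrow> 'a::field ext" where
  "basis_vec k = (\<lambda>S. if S = {k} then 1 else 0)"

definition ext_unit :: "'a::field ext" where
  "ext_unit = (\<lambda>S. if S = {} then 1 else 0)"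

section \<open>Associativity\<close>

definition inversions :: "nat set \<Rightarrow> nat set \<Rightarrow> nat" where
  "inversions S T = card {(s, t). s \<in> S \<and> t \<in> T \<and> t < s}"

lemma wsign_eq_inversions: "wsign S T = (-1) ^ inversions S T"
  by (simp add: wsign_def inversions_def)

lemma inversions_singleton_left: "finite T \<Longrightarrow> inversions {i} T = card {t\<in>T. t < i}"
proof -
  assume "finite T"
  have "{(s, t). s \<in> {i} \<and> t \<in> T \<and> t < s} = (\<lambda>t. (i,t)) ` {t\<in>T. t < i}" by auto
  then show ?thesis unfolding inversions_def by (simp add: card_image inj_on_def)
qed

lemma inversions_singleton_right: "finite S \<Longrightarrow> inversions S {i} = card {s\<in>S. i < s}"
proof -
  assume "finite S"
  have "{(s, t). s \<in> S \<and> t \<in> {i} \<and> t < s} = (\<lambda>s. (s,i)) ` {s\<in>S. i < s}" by auto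
  then show ?thesis unfolding inversions_def by (simp add: card_image inj_on_def)
qed

lemma inversions_Un_left:
  assumes "finite A" "finite B" "finite C" "A \<inter> B = {}"
  shows "inversions (A \<union> B) C = inversions A C + inversions B C"
proof -
  have eq: "{(s, t). s \<in> A \<union> B \<and> t \<in> C \<and> t < s} =
        {(s, t). s \<in> A \<and> t \<in> C \<and> t < s} \<union> {(s, t). s \<in> B \<and> t \<in> C \<and> t < s}" by auto
  have f1: "finite {(s, t). s \<in> A \<and> t \<in> C \<and> t < s}"
    by (rule finite_subset[of _ "A \<times> C"]) (use assms in auto)
  have f2: "finite {(s, t). s \<in> B \<and> t \<in> C \<and> t < s}"
    by (rule finite_subset[of _ "B \<times> C"]) (use assms in auto)
  show ?thesis unfolding inversions_def eq
    by (rule card_Un_disjoint[OF f1 f2]) (use assms in auto)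
qed

lemma inversions_Un_right:
  assumes "finite A" "finite B" "finite C" "B \<inter> C = {}"
  shows "inversions A (B \<union> C) = inversions A B + inversions A C"
proof -
  have eq: "{(s, t). s \<in> A \<and> t \<in> B \<union> C \<and> t < s} =
        {(s, t). s \<in> A \<and> t \<in> B \<and> t < s} \<union> {(s, t). s \<in> A \<and> t \<in> C \<and> t < s}" by auto
  have f1: "finite {(s, t). s \<in> A \<and> t \<in> B \<and> t < s}"
    by (rule finite_subset[of _ "A \<times> B"]) (use assms in auto)
  have f2: "finite {(s, t). s \<in> A \<and> t \<in> C \<and> t < s}"
    by (rule finite_subset[of _ "A \<times> C"]) (use assms in auto)
  show ?thesis unfolding inversions_def eq
    by (rule card_Un_disjoint[OF f1 f2]) (use assms in auto)
qed

lemma wsign_assoc: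
  assumes "finite A" "finite B" "finite C" "A \<inter> B = {}" "A \<inter> C = {}" "B \<inter> C = {}"
  shows "(wsign A B :: 'a::field) * wsign (A \<union> B) C = wsign B C * wsign A (B \<union> C)"
  unfolding wsign_eq_inversions inversions_Un_left[OF assms(1,2,3,4)] inversions_Un_right[OF assms(1,2,3,6)] power_add
  by (simp only: ac_simps)

lemma wsign_square: "(wsign A B :: 'a::field) * wsign A B = 1"
  unfolding wsign_eq_inversions by (simp add: power_mult_distrib[symmetric])

lemma wedge_wedge_left_apply:
  assumes U: "U \<subseteq> top5"
  shows "wedge (wedge f g) h U =
    (\<Sum>(S, A)\<in>Sigma (Pow U) Pow. f A * g (S - A) * h (U - S) * (wsign A (S - A) * wsign S (U - S)))"
proof -
  have fU: "finite U" using U finite_subset by blast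
  have "wedge (wedge f g) h U =
      (\<Sum>S\<in>Pow U. (\<Sum>A\<in>Pow S. f A * g (S - A) * wsign A (S - A)) * h (U - S) * wsign S (U - S))"
    using U by (simp add: wedge_def) (intro sum.cong refl, auto)
  also have "\<dots> = (\<Sum>S\<in>Pow U. \<Sum>A\<in>Pow S. f A * g (S - A) * h (U - S) * (wsign A (S - A) * wsign S (U - S)))"
    by (simp only: sum_distrib_right sum_distrib_left mult_ac)
  also have "\<dots> = (\<Sum>(S, A)\<in>Sigma (Pow U) Pow. f A * g (S - A) * h (U - S) * (wsign A (S - A) * wsign S (U - S)))"
    by (rule sum.Sigma) (use fU in \<open>auto intro: finite_subset\<close>)
  finally show ?thesis .
qed

lemma wedge_wedge_right_apply:
  assumes U: "U \<subseteq> top5"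
  shows "wedge f (wedge g h) U =
    (\<Sum>(A, B)\<in>Sigma (Pow U) (\<lambda>A. Pow (U - A)). f A * g B * h (U - A - B) * (wsign B (U - A - B) * wsign A (U - A)))"
proof -
  have fU: "finite U" using U finite_subset by blast
  have "wedge f (wedge g h) U =
      (\<Sum>A\<in>Pow U. f A * (\<Sum>B\<in>Pow (U - A). g B * h (U - A - B) * wsign B (U - A - B)) * wsign A (U - A))"
    using U by (simp add: wedge_def) (intro sum.cong refl, auto)
  also have "\<dots> = (\<Sum>A\<in>Pow U. \<Sum>B\<in>Pow (U - A). f A * g B * h (U - A - B) * (wsign B (U - A - B) * wsign A (U - A)))"
    by (simp only: sum_distrib_right sum_distrib_left mult_ac)
  also have "\<dots> = (\<Sum>(A, B)\<in>Sigma (Pow U) (\<lambda>A. Pow (U - A)). f A * g B * h (U - A - B) * (wsign B (U - A - B) * wsign A (U - A)))"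
    by (rule sum.Sigma) (use fU in \<open>auto intro: finite_subset\<close>)
  finally show ?thesis .
qed

lemma wedge_assoc: "wedge (wedge f g) h = wedge f (wedge g (h :: 'a::field ext))"
proof (rule ext)
  fix U :: "nat set"
  show "wedge (wedge f g) h U = wedge f (wedge g h) U"
  proof (cases "U \<subseteq> top5")
    case False
    then show ?thesis by (simp add: wedge_def)
  next
    case True
    have fU: "finite U" using True finite_subset by blast
    have "(\<Sum>(S, A)\<in>Sigma (Pow U) Pow. f A * g (S - A) * h (U - S) * (wsign A (S - A) * wsign S (U - S))) =
          (\<Sum>(A, B)\<in>Sigma (Pow U) (\<lambda>A. Pow (U - A)). f A * g B * h (U - A - B) * (wsign B (U - A - B) * wsign A (U - A)))"
    proof (rule sum.reindex_bij_witness[where i = "\<lambda>(A, B). (A \<union> B, A)" and j = "\<lambda>(S, A). (A, S - A)"])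
      fix a assume a: "a \<in> Sigma (Pow U) Pow"
      obtain S A where a_eq: "a = (S, A)" by (cases a)
      with a have SU: "S \<subseteq> U" and AS: "A \<subseteq> S" by auto
      have fS: "finite S" using fU SU finite_subset by blast
      have fA: "finite A" using fS AS finite_subset by blast
      have "A \<union> (S - A) = S" "(S - A) \<union> (U - S) = U - A" using SU AS by auto
      then have "(wsign A (S - A) :: 'a) * wsign S (U - S) = wsign (S - A) (U - S) * wsign A (U - A)"
        using wsign_assoc[of A "S - A" "U - S", OF fA] fS fU by auto
      moreover have "U - A - (S - A) = U - S" using SU AS by auto
      ultimately show "(case (case a of (S, A) \<Rightarrow> (A, S - A)) of (A, B) \<Rightarrow>
              f A * g B * h (U - A - B) * (wsign B (U - A - B) * wsign A (U - A))) =
            (case a of (S, A) \<Rightarrow> f A * g (S - A) * h (U - S) * (wsign A (S - A) * wsign S (U - S)))"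
        unfolding a_eq by simp
    qed auto
    then show ?thesis by (simp only: wedge_wedge_left_apply[OF True] wedge_wedge_right_apply[OF True])
  qed
qed

section \<open>Bilinearity and grading\<close>

lemma wedge_add_left: "wedge (f + g) h = wedge f h + wedge g (h::'a::field ext)"
  unfolding fun_eq_iff wedge_def plus_fun_apply by (simp only: distrib_right sum.distrib if_distrib) simp
lemma wedge_add_right: "wedge h (f + g) = wedge h f + wedge h (g::'a::field ext)"
  unfolding fun_eq_iff wedge_def plus_fun_apply by (simp only: distrib_left distrib_right sum.distrib if_distrib) simp
lemma wedge_scale_left: "wedge (scaleE c f) h = scaleE c (wedge f (h::'a::field ext))"
  unfolding fun_eq_iff wedge_def scaleE_apply by (simp only: sum_distrib_left mult_ac if_distrib) simp
lemma wedge_scale_right: "wedge h (scaleE c f) = scaleE c (wedge h (f::'a::field ext))"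
  unfolding fun_eq_iff wedge_def scaleE_apply by (simp only: sum_distrib_left mult_ac if_distrib) simp

lemma linear_wedge_right: "Vector_Spaces.linear scaleE scaleE (\<lambda>f. wedge (h::'a::field ext) f)"
  by (simp add: Vector_Spaces.linear_iff vector_space_scaleE wedge_add_right wedge_scale_right)

lemma wedge_zero_left[simp]: "wedge 0 h = (0::'a::field ext)"
  by (simp add: wedge_def fun_eq_iff)
lemma wedge_zero_right[simp]: "wedge h 0 = (0::'a::field ext)"
  by (simp add: wedge_def fun_eq_iff)
lemma wedge_minus_left: "wedge (- f) h = - wedge f (h::'a::field ext)"
  by (auto simp: wedge_def fun_eq_iff sum_negf)
lemma wedge_minus_right: "wedge h (- f) = - wedge h (f::'a::field ext)"
  by (auto simp: wedge_def fun_eq_iff sum_negf)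
lemma wedge_diff_left: "wedge (f - g) h = wedge f h - wedge g (h::'a::field ext)"
  by (simp only: diff_conv_add_uminus wedge_add_left wedge_minus_left)
lemma wedge_diff_right: "wedge h (f - g) = wedge h f - wedge h (g::'a::field ext)"
  by (simp only: diff_conv_add_uminus wedge_add_right wedge_minus_right)

lemma grade_extAlg: "f \<in> grade d \<Longrightarrow> f \<in> extAlg"
  by (auto simp: grade_def extAlg_def)

lemma support_subspace: "E.subspace {f :: 'a::field ext. \<forall>S. f S \<noteq> 0 \<longrightarrow> P S}"
  unfolding E.subspace_def
proof (intro conjI ballI allI)
  show "0 \<in> {f :: 'a::field ext. \<forall>S. f S \<noteq> 0 \<longrightarrow> P S}" by simp
  fix x y :: "'a ext" and c :: 'a
  assume x: "x \<in> {f. \<forall>S. f S \<noteq> 0 \<longrightarrow> P S}"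
  then show "scaleE c x \<in> {f. \<forall>S. f S \<noteq> 0 \<longrightarrow> P S}" by simp
  assume y: "y \<in> {f. \<forall>S. f S \<noteq> 0 \<longrightarrow> P S}"
  show "x + y \<in> {f. \<forall>S. f S \<noteq> 0 \<longrightarrow> P S}"
  proof (clarify)
    fix S assume "(x + y) S \<noteq> 0"
    then have "x S \<noteq> 0 \<or> y S \<noteq> 0" by (auto simp: plus_fun_apply)
    then show "P S" using x y by blast
  qed
qed

lemma grade_subspace: "E.subspace (grade d)"
  unfolding grade_def by (rule support_subspace)

lemma grade_zero_outside: "f \<in> grade d \<Longrightarrow> \<not> (S \<subseteq> top5 \<and> card S = d) \<Longrightarrow> f S = 0"
  by (auto simp: grade_def)

lemma wedge_grade:
  assumes "f \<in> grade d" "g \<in> grade d'"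
  shows "wedge f g \<in> grade (d + d')"
  unfolding grade_def
proof (clarify)
  fix U assume ne: "wedge f g U \<noteq> 0"
  then have U: "U \<subseteq> top5" by (auto simp: wedge_def split: if_splits)
  then have fU: "finite U" using finite_subset by blast
  have "(\<Sum>S\<in>Pow U. f S * g (U - S) * wsign S (U - S)) \<noteq> 0"
    using ne unfolding wedge_def if_P[OF U] .
  then obtain S where S: "S \<in> Pow U" "f S * g (U - S) * wsign S (U - S) \<noteq> 0"
    by (rule sum.not_neutral_contains_not_neutral)
  then have "f S \<noteq> 0" "g (U - S) \<noteq> 0" by auto
  with assms have "card S = d" "card (U - S) = d'" by (auto simp: grade_def)
  moreover have "card U = card S + card (U - S)"
    using S fU by (metis PowD card_Diff_subset card_mono diff_add_inverse le_add_diff_inverse finite_subset)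
  ultimately show "U \<subseteq> top5 \<and> card U = d + d'" using U by simp
qed

lemma wedge_grade1_grade1: "l \<in> grade 1 \<Longrightarrow> m \<in> grade 1 \<Longrightarrow> wedge l m \<in> grade 2"
  using wedge_grade[of l 1 m 1] by (simp only: one_add_one)

lemma wedge_grade1_grade2: "l \<in> grade 1 \<Longrightarrow> q \<in> grade 2 \<Longrightarrow> wedge l q \<in> grade 3"
proof -
  assume "l \<in> grade 1" "q \<in> grade 2"
  moreover have e: "(1::nat) + 2 = 3" by simp
  ultimately show ?thesis using wedge_grade[of l 1 q 2] unfolding e by blast
qed

lemma grade1_support: "l \<in> grade 1 \<Longrightarrow> l S \<noteq> 0 \<Longrightarrow> \<exists>i<5. S = {i}"
  by (auto simp: grade_def card_Suc_eq)

lemma wedge_grade1_left_apply: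
  assumes l: "l \<in> grade 1"
  shows "wedge l f U = (if U \<subseteq> top5 then (\<Sum>i\<in>U. l {i} * f (U - {i}) * wsign {i} (U - {i})) else 0)"
proof (cases "U \<subseteq> top5")
  case True
  have fU: "finite U" using True finite_subset by blast
  have "(\<Sum>S\<in>Pow U. l S * f (U - S) * wsign S (U - S)) = (\<Sum>S\<in>(\<lambda>i. {i}) ` U. l S * f (U - S) * wsign S (U - S))"
  proof (rule sum.mono_neutral_right)
    show "finite (Pow U)" using fU by simp
    show "(\<lambda>i. {i}) ` U \<subseteq> Pow U" by auto
    show "\<forall>S\<in>Pow U - (\<lambda>i. {i}) ` U. l S * f (U - S) * wsign S (U - S) = 0"
      using grade1_support[OF l] by fastforce
  qed
  also have "\<dots> = (\<Sum>i\<in>U. l {i} * f (U - {i}) * wsign {i} (U - {i}))"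
    by (subst sum.reindex) (auto simp: inj_on_def)
  finally show ?thesis using True by (simp add: wedge_def)
qed (simp add: wedge_def)

lemma wedge_grade1_right_apply:
  assumes l: "l \<in> grade 1"
  shows "wedge f l U = (if U \<subseteq> top5 then (\<Sum>i\<in>U. f (U - {i}) * l {i} * wsign (U - {i}) {i}) else 0)"
proof (cases "U \<subseteq> top5")
  case True
  have fU: "finite U" using True finite_subset by blast
  have "(\<Sum>S\<in>Pow U. f S * l (U - S) * wsign S (U - S)) = (\<Sum>S\<in>(\<lambda>i. U - {i}) ` U. f S * l (U - S) * wsign S (U - S))"
  proof (rule sum.mono_neutral_right)
    show "finite (Pow U)" using fU by simp
    show "(\<lambda>i. U - {i}) ` U \<subseteq> Pow U" by auto
    show "\<forall>S\<in>Pow U - (\<lambda>i. U - {i}) ` U. f S * l (U - S) * wsign S (U - S) = 0"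
    proof
      fix S assume S: "S \<in> Pow U - (\<lambda>i. U - {i}) ` U"
      show "f S * l (U - S) * wsign S (U - S) = 0"
      proof (rule ccontr)
        assume "f S * l (U - S) * wsign S (U - S) \<noteq> 0"
        then have "l (U - S) \<noteq> 0" by auto
        then obtain i where "U - S = {i}" using grade1_support[OF l] by blast
        then have "S = U - {i}" "i \<in> U" using S by auto
        then show False using S by auto
      qed
    qed
  qed
  also have "\<dots> = (\<Sum>i\<in>U. f (U - {i}) * l {i} * wsign (U - {i}) {i})"
  proof (subst sum.reindex)
    show "inj_on (\<lambda>i. U - {i}) U" by (auto simp: inj_on_def)
    have "\<And>i. i \<in> U \<Longrightarrow> U - (U - {i}) = {i}" by auto
    then show "sum ((\<lambda>S. f S * l (U - S) * wsign S (U - S)) \<circ> (\<lambda>i. U - {i})) U =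
               (\<Sum>i\<in>U. f (U - {i}) * l {i} * wsign (U - {i}) {i})" by (intro sum.cong) auto
  qed
  finally show ?thesis using True by (simp add: wedge_def)
qed (simp add: wedge_def)

lemma wsign_singleton_left: "finite T \<Longrightarrow> wsign {i} T = (-1) ^ card {t\<in>T. t < i}"
  by (simp add: wsign_eq_inversions inversions_singleton_left)
lemma wsign_singleton_right: "finite S \<Longrightarrow> wsign S {i} = (-1) ^ card {s\<in>S. i < s}"
  by (simp add: wsign_eq_inversions inversions_singleton_right)

lemma wedge_grade1_commute:
  assumes l: "l \<in> grade 1" and f: "f \<in> grade d"
  shows "wedge l f = scaleE ((-1)^d) (wedge f l)"
proof (rule ext)
  fix U
  show "wedge l f U = scaleE ((-1)^d) (wedge f l) U"
  proof (cases "U \<subseteq> top5")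
    case True
    have fU: "finite U" using True finite_subset by blast
    have "(\<Sum>i\<in>U. l {i} * f (U - {i}) * wsign {i} (U - {i})) = 
          (-1)^d * (\<Sum>i\<in>U. f (U - {i}) * l {i} * wsign (U - {i}) {i})"
      unfolding sum_distrib_left
    proof (rule sum.cong[OF refl])
      fix i assume i: "i \<in> U"
      show "l {i} * f (U - {i}) * wsign {i} (U - {i}) = (-1)^d * (f (U - {i}) * l {i} * wsign (U - {i}) {i})"
      proof (cases "f (U - {i}) = 0")
        case False
        then have cd: "card (U - {i}) = d" using f by (auto simp: grade_def)
        have part: "U - {i} = {t\<in>U - {i}. t < i} \<union> {s\<in>U - {i}. i < s}" by auto
        have "card (U - {i}) = card {t\<in>U - {i}. t < i} + card {s\<in>U - {i}. i < s}"
          by (subst part, rule card_Un_disjoint) (use fU in auto)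
        then have "(-1::'a)^card {t\<in>U - {i}. t < i} = (-1)^d * (-1)^card {s\<in>U - {i}. i < s}"
          using cd by (simp add: power_add[symmetric] mult_2[symmetric] power_mult)
             (metis (no_types, lifting) add.commute left_minus_one_mult_self power_add)
        then show ?thesis using fU by (simp add: wsign_singleton_left wsign_singleton_right)
      qed simp
    qed
    then show ?thesis using True by (simp add: wedge_grade1_left_apply[OF l] wedge_grade1_right_apply[OF l])
  qed (simp add: wedge_def)
qed

section \<open>Vectors, linear forms and graded commutativity\<close>

lemma sum_fun_apply: "(\<Sum>i\<in>A. F i) x = (\<Sum>i\<in>A. F i x)"
  by (induct A rule: infinite_finite_induct) auto

lemma basis_vec_grade: "k < 5 \<Longrightarrow> basis_vec k \<in> grade 1"
  by (auto simp: basis_vec_def grade_def split: if_splits)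

lemma basis_vec_singleton[simp]: "basis_vec k {i} = (if k = i then 1 else 0)"
  by (auto simp: basis_vec_def)

lemma wedge_basis_vec_left_apply:
  assumes "i < 5"
  shows "wedge (basis_vec i) f U = (if U \<subseteq> top5 \<and> i \<in> U then f (U - {i}) * wsign {i} (U - {i}) else 0)"
proof (cases "U \<subseteq> top5")
  case True
  then have fU: "finite U" using finite_subset by blast
  have "(\<Sum>j\<in>U. basis_vec i {j} * f (U - {j}) * wsign {j} (U - {j})) = 
        (\<Sum>j\<in>U. if j = i then f (U - {i}) * wsign {i} (U - {i}) else 0)"
    by (intro sum.cong) auto
  also have "\<dots> = (if i \<in> U then f (U - {i}) * wsign {i} (U - {i}) else 0)"
    using fU by (simp add: sum.delta')
  finally show ?thesis using True by (simp add: wedge_grade1_left_apply[OF basis_vec_grade[OF assms]])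
qed (simp add: wedge_def)

lemma grade1_expansion:
  assumes "l \<in> grade 1"
  shows "l = (\<Sum>k\<in>top5. scaleE (l {k}) (basis_vec k))"
proof (rule ext)
  fix S
  have "(\<Sum>k\<in>top5. scaleE (l {k}) (basis_vec k)) S = (\<Sum>k\<in>top5. if S = {k} then l {k} else 0)"
    by (auto simp: sum_fun_apply basis_vec_def intro!: sum.cong)
  also have "\<dots> = l S"
  proof (cases "\<exists>k<5. S = {k}")
    case True
    then obtain k where k: "k < 5" "S = {k}" by blast
    have "(\<Sum>j\<in>top5. if S = {j} then l {j} else 0) = (\<Sum>j\<in>top5. if j = k then l {k} else 0)"
      by (intro sum.cong) (auto simp: k)
    then show ?thesis using k by simp
  next
    case False
    then have "l S = 0" using grade1_support[OF assms] by blast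
    then show ?thesis using False by (auto intro!: sum.neutral)
  qed
  finally show "l S = (\<Sum>k\<in>top5. scaleE (l {k}) (basis_vec k)) S" by simp
qed

lemma grade1_eq_zero:
  assumes "l \<in> grade 1" "\<And>j. j < 5 \<Longrightarrow> l {j} = 0"
  shows "l = 0"
  using grade1_expansion[OF assms(1)] assms(2) by (simp add: sum.neutral fun_eq_iff)

(* A linear form on E\<^sub>1 is given by its values \<phi> k on the basis vectors. *)

definition eval_form :: "(nat \<Rightarrow> 'a) \<Rightarrow> 'a::field ext \<Rightarrow> 'a" where
  "eval_form \<phi> l = (\<Sum>k\<in>top5. \<phi> k * l {k})"

lemma eval_form_add: "eval_form \<phi> (f + g) = eval_form \<phi> f + eval_form \<phi> g"
  unfolding eval_form_def plus_fun_apply by (simp only: distrib_left sum.distrib)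
lemma eval_form_scale: "eval_form \<phi> (scaleE c f) = c * eval_form \<phi> f"
  unfolding eval_form_def scaleE_apply by (simp only: sum_distrib_left mult_ac)
lemma eval_form_zero[simp]: "eval_form \<phi> 0 = 0"
  by (simp add: eval_form_def)
lemma eval_form_minus: "eval_form \<phi> (- f) = - eval_form \<phi> f"
  by (simp add: eval_form_def sum_negf)
lemma eval_form_diff: "eval_form \<phi> (f - g) = eval_form \<phi> f - eval_form \<phi> g"
  by (simp only: diff_conv_add_uminus eval_form_add eval_form_minus)
lemma eval_form_basis_vec: "k < 5 \<Longrightarrow> eval_form \<phi> (basis_vec k) = \<phi> k"
  by (simp add: eval_form_def if_distrib cong: if_cong)

lemma wedge_ext_unit_right: "f \<in> extAlg \<Longrightarrow> wedge f ext_unit = f"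
proof (rule ext)
  fix U assume f: "f \<in> extAlg"
  show "wedge f ext_unit U = f U"
  proof (cases "U \<subseteq> top5")
    case True
    then have fU: "finite U" using finite_subset by blast
    have "(\<Sum>S\<in>Pow U. f S * ext_unit (U - S) * wsign S (U - S)) = (\<Sum>S\<in>Pow U. if S = U then f U * wsign U {} else 0)"
      by (intro sum.cong) (auto simp: ext_unit_def)
    also have "\<dots> = f U" using fU by (simp add: wsign_eq_inversions inversions_def)
    finally show ?thesis using True by (simp add: wedge_def)
  next
    case False
    then show ?thesis using f by (auto simp: wedge_def extAlg_def)
  qed
qed

lemma wedge_grade1_grade1_apply:
  assumes l: "l \<in> grade 1" and m: "m \<in> grade 1" and ij: "i < j" "j < 5"
  shows "wedge l m {i, j} = l {i} * m {j} - l {j} * m {i}"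
proof -
  have s: "{i, j} \<subseteq> top5" using ij by auto
  have d1: "{i, j} - {i} = {j}" and d2: "{i, j} - {j} = {i}" using ij by auto
  have e1: "{t\<in>{j}. t < i} = {}" and e2: "{t\<in>{i}. t < j} = {i}" using ij by auto
  have w1: "wsign {i} {j} = (1::'a)"
    by (simp only: wsign_singleton_left[OF finite.insertI[OF finite.emptyI]] e1 card.empty power_0)
  have w2: "wsign {j} {i} = (-1::'a)"
    by (simp only: wsign_singleton_left[OF finite.insertI[OF finite.emptyI]] e2) simp
  show ?thesis using ij
    by (simp add: wedge_grade1_left_apply[OF l] s d1 d2 w1 w2)
qed

lemma grade2_support:
  assumes "f \<in> grade 2" "f U \<noteq> 0"
  shows "\<exists>i j. i < j \<and> j < 5 \<and> U = {i, j}"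
proof -
  from assms have U: "U \<subseteq> top5" "card U = 2" by (auto simp: grade_def)
  then obtain a b where ab: "U = {a, b}" "a \<noteq> b" by (auto simp: card_2_iff)
  show ?thesis
  proof (cases "a < b")
    case True then show ?thesis using ab U by (intro exI[of _ a] exI[of _ b]) auto
  next
    case False then show ?thesis using ab U by (intro exI[of _ b] exI[of _ a]) auto
  qed
qed

lemma wedge_grade1_self:
  assumes l: "l \<in> grade 1"
  shows "wedge l l = 0"
proof (rule ext)
  fix U
  show "wedge l l U = 0 U"
  proof (cases "wedge l l U = 0")
    case False
    then obtain i j where "i < j" "j < 5" "U = {i, j}"
      using grade2_support[OF wedge_grade1_grade1[OF l l] False] by blast
    then show ?thesis using wedge_grade1_grade1_apply[OF l l] by (simp add: mult.commute)
  qed simp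
qed

lemma wedge_anticomm:
  assumes l: "l \<in> grade 1" and m: "m \<in> grade 1"
  shows "wedge l m = - wedge m l"
  using wedge_grade1_commute[OF l m] by (simp add: fun_eq_iff)

lemma wedge_grade1_grade2_commute:
  assumes l: "l \<in> grade 1" and f: "f \<in> grade 2"
  shows "wedge l f = wedge f l"
  using wedge_grade1_commute[OF l f] by (simp add: fun_eq_iff)

section \<open>Standard basis and dimensions\<close>

definition monomial :: "nat set \<Rightarrow> 'a::field ext" where
  "monomial S = (\<lambda>T. if T = S then 1 else 0)"

definition index_sets :: "nat \<Rightarrow> nat set set" where
  "index_sets d = {S. S \<subseteq> top5 \<and> card S = d}"

lemma finite_index_sets: "finite (index_sets d)"
  by (rule finite_subset[of _ "Pow top5"]) (auto simp: index_sets_def)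

lemma card_index_sets: "card (index_sets d) = 5 choose d"
  unfolding index_sets_def using n_subsets[of top5 d] by simp

lemma monomial_grade: "S \<in> index_sets d \<Longrightarrow> monomial S \<in> grade d"
  by (auto simp: monomial_def grade_def index_sets_def)

lemma grade_monomial_expansion:
  assumes "f \<in> grade d"
  shows "f = (\<Sum>S\<in>index_sets d. scaleE (f S) (monomial S))"
proof (rule ext)
  fix T
  have "(\<Sum>S\<in>index_sets d. scaleE (f S) (monomial S)) T = (\<Sum>S\<in>index_sets d. if S = T then f T else 0)"
    by (simp add: sum_fun_apply monomial_def) (intro sum.cong, auto)
  also have "\<dots> = f T"
    using finite_index_sets[of d] assms by (auto simp: sum.delta index_sets_def grade_def)
  finally show "f T = (\<Sum>S\<in>index_sets d. scaleE (f S) (monomial S)) T" by simp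
qed

lemma inj_monomial: "inj (monomial :: nat set \<Rightarrow> 'a::field ext)"
  by (auto simp: inj_on_def monomial_def fun_eq_iff split: if_splits)

lemma independent_monomials: "\<not> E.dependent ((monomial :: nat set \<Rightarrow> 'a::field ext) ` A)" if "finite A"
proof
  assume "E.dependent ((monomial :: nat set \<Rightarrow> 'a::field ext) ` A)"
  then have "\<exists>u. (\<exists>v\<in>monomial ` A. u v \<noteq> (0::'a)) \<and> (\<Sum>v\<in>(monomial :: nat set \<Rightarrow> 'a ext) ` A. scaleE (u v) v) = 0"
    using E.dependent_finite[of "monomial ` A"] that by blast
  then obtain u where u: "\<exists>v\<in>monomial ` A. u v \<noteq> (0::'a)" "(\<Sum>v\<in>(monomial :: nat set \<Rightarrow> 'a ext) ` A. scaleE (u v) v) = 0"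
    by blast
  from u(1) obtain S where S: "S \<in> A" "u (monomial S) \<noteq> 0" by auto
  have "0 = (\<Sum>v\<in>(monomial :: nat set \<Rightarrow> 'a ext) ` A. scaleE (u v) v) S" using u(2) by simp
  also have "\<dots> = (\<Sum>T\<in>A. u (monomial T) * monomial T S)"
    by (simp add: sum_fun_apply sum.reindex[OF inj_on_subset[OF inj_monomial]])
  also have "\<dots> = (\<Sum>T\<in>A. if T = S then u (monomial S) else 0)"
    by (intro sum.cong) (auto simp: monomial_def)
  also have "\<dots> = u (monomial S)" using S that by simp
  finally show False using S by simp
qed

lemma grade_span: "grade d \<subseteq> E.span ((monomial :: nat set \<Rightarrow> 'a::field ext) ` index_sets d)"
proof
  fix f :: "'a ext" assume f: "f \<in> grade d"
  have "(\<Sum>S\<in>index_sets d. scaleE (f S) (monomial S)) \<in> E.span (monomial ` index_sets d)"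
    by (intro E.span_sum E.span_scale E.span_base) auto
  then show "f \<in> E.span (monomial ` index_sets d)" using grade_monomial_expansion[OF f] by simp
qed

lemma finite_monomials: "finite ((monomial :: nat set \<Rightarrow> 'a::field ext) ` index_sets d)"
  using finite_index_sets by simp

lemma card_monomials: "card ((monomial :: nat set \<Rightarrow> 'a::field ext) ` index_sets d) = 5 choose d"
  using card_index_sets by (simp add: card_image inj_on_subset[OF inj_monomial])

lemma dim_grade: "E.dim (grade d :: 'a::field ext set) = 5 choose d"
proof -
  have "E.dim (grade d :: 'a ext set) = card ((monomial :: nat set \<Rightarrow> 'a ext) ` index_sets d)"
    by (rule E.dim_unique[OF _ grade_span independent_monomials[OF finite_index_sets]])
      (use monomial_grade in auto)
  then show ?thesis by (simp only: card_monomials)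
qed

lemma independent_in_grade_bound:
  assumes "B \<subseteq> grade d" "\<not> E.dependent B"
  shows "finite B" "card B \<le> 5 choose d"
proof -
  have "B \<subseteq> E.span (monomial ` index_sets d)" using assms(1) grade_span by blast
  then show "finite B" "card B \<le> 5 choose d"
    using E.independent_span_bound[OF finite_monomials[of d] assms(2)] card_monomials[of d, where 'a='a]
    by auto
qed

lemma choose_5: "(5::nat) choose 1 = 5" "(5::nat) choose 2 = 10" "(5::nat) choose 3 = 10"
  by (simp_all add: numeral_eq_Suc)

lemma monomial_pair:
  assumes "i < j" "j < 5"
  shows "monomial {i, j} = (wedge (basis_vec i) (basis_vec j) :: 'a::field ext)"
proof (rule ext)
  fix U
  show "monomial {i, j} U = (wedge (basis_vec i) (basis_vec j) :: 'a::field ext) U"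
  proof (cases "\<exists>a b. a < b \<and> b < 5 \<and> U = {a, b}")
    case True
    then obtain a b where ab: "a < b" "b < 5" "U = {a, b}" by blast
    have "wedge (basis_vec i) (basis_vec j) U = (basis_vec i {a} * basis_vec j {b} - basis_vec i {b} * basis_vec j {a} :: 'a)"
      using wedge_grade1_grade1_apply[OF basis_vec_grade basis_vec_grade ab(1,2), of i j] assms ab by simp
    also have "\<dots> = monomial {i, j} U" using assms ab
      by (auto simp: monomial_def doubleton_eq_iff)
    finally show ?thesis by simp
  next
    case False
    then have "(wedge (basis_vec i) (basis_vec j) :: 'a ext) U = 0"
      using grade2_support[OF wedge_grade1_grade1[OF basis_vec_grade basis_vec_grade], of i j U] assms by auto
    moreover have "monomial {i, j} U = (0::'a)" using False assms by (auto simp: monomial_def)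
    ultimately show ?thesis by simp
  qed
qed

lemma grade2_subspace_induct:
  assumes "f \<in> grade 2" "E.subspace P"
    and "\<And>i j. i < j \<Longrightarrow> j < 5 \<Longrightarrow> wedge (basis_vec i) (basis_vec j) \<in> P"
  shows "f \<in> P"
proof -
  have "monomial S \<in> P" if "S \<in> index_sets 2" for S
  proof -
    have "S \<subseteq> top5" "card S = 2" using that by (auto simp: index_sets_def)
    then obtain a b where ab: "S = {a, b}" "a \<noteq> b" "a < 5" "b < 5" by (auto simp: card_2_iff)
    show ?thesis
    proof (cases "a < b")
      case True
      then show ?thesis using ab assms(3) monomial_pair by metis
    next
      case False
      then have "b < a" "S = {b, a}" using ab by auto
      then show ?thesis using ab assms(3) monomial_pair by metis
    qed
  qed
  then have "E.span (monomial ` index_sets 2) \<subseteq> P" using E.span_minimal assms(2) by blast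
  then show ?thesis using grade_span assms(1) by blast
qed

section \<open>Contraction with a linear form\<close>

(* Contraction (interior product) with the linear form \<phi>, the antiderivation of degree -1
   extending \<phi>; wsign {k} S is the sign in e\<^sub>k \<wedge> e\<^sub>S = \<plusminus>e\<^bsub>S \<union> {k}\<^esub>. *)

definition contract :: "(nat \<Rightarrow> 'a) \<Rightarrow> 'a::field ext \<Rightarrow> 'a ext" where
  "contract \<phi> f = (\<lambda>S. if S \<subseteq> top5 then (\<Sum>k\<in>top5 - S. \<phi> k * wsign {k} S * f (insert k S)) else 0)"

lemma contract_add: "contract \<phi> (f + g) = contract \<phi> f + contract \<phi> g"
  unfolding fun_eq_iff contract_def plus_fun_apply by (simp only: distrib_left sum.distrib if_distrib) simp
lemma contract_scale: "contract \<phi> (scaleE c f) = scaleE c (contract \<phi> f)"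
  unfolding fun_eq_iff contract_def scaleE_apply by (simp only: sum_distrib_left mult_ac if_distrib) simp
lemma contract_zero[simp]: "contract \<phi> 0 = 0"
  by (auto simp: contract_def fun_eq_iff)

lemma contract_grade:
  assumes "f \<in> grade (Suc d)"
  shows "contract \<phi> f \<in> grade d"
  unfolding grade_def
proof clarify
  fix S assume ne: "contract \<phi> f S \<noteq> 0"
  then have S: "S \<subseteq> top5" by (auto simp: contract_def split: if_splits)
  then have fS: "finite S" using finite_subset by blast
  have "(\<Sum>k\<in>top5 - S. \<phi> k * wsign {k} S * f (insert k S)) \<noteq> 0"
    using ne unfolding contract_def if_P[OF S] .
  then obtain k where k: "k \<in> top5 - S" "\<phi> k * wsign {k} S * f (insert k S) \<noteq> 0"
    by (rule sum.not_neutral_contains_not_neutral)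
  then have k: "k \<in> top5 - S" "f (insert k S) \<noteq> 0" by auto
  then have "card (insert k S) = Suc d" using assms by (auto simp: grade_def)
  then have "card S = d" using k fS by simp
  then show "S \<subseteq> top5 \<and> card S = d" using S by simp
qed

lemma contract_grade2: "p \<in> grade 2 \<Longrightarrow> contract \<phi> p \<in> grade 1"
  using contract_grade[of p "Suc 0" \<phi>] by (simp add: numeral_2_eq_2)

lemma contract_grade1:
  assumes l: "l \<in> grade 1"
  shows "contract \<phi> l = scaleE (eval_form \<phi> l) ext_unit"
proof (rule ext)
  fix S
  show "contract \<phi> l S = scaleE (eval_form \<phi> l) ext_unit S"
  proof (cases "S = {}")
    case True
    then show ?thesis by (simp add: contract_def eval_form_def ext_unit_def wsign_def)
  next
    case False
    have "\<And>k. k \<notin> S \<Longrightarrow> l (insert k S) = 0"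
    proof -
      fix k assume "k \<notin> S"
      with False have "insert k S \<noteq> {i}" for i by auto
      then show "l (insert k S) = 0" using grade1_support[OF l] by blast
    qed
    then show ?thesis using False by (simp add: contract_def ext_unit_def)
  qed
qed

lemma card_filter_insert:
  assumes "finite A" "x \<notin> A"
  shows "card {s\<in>insert x A. P s} = card {s\<in>A. P s} + (if P x then 1 else 0)"
proof -
  have "{s\<in>insert x A. P s} = (if P x then insert x {s\<in>A. P s} else {s\<in>A. P s})" by auto
  then show ?thesis using assms by simp
qed

lemma contract_wedge_sign:
  assumes U: "finite U" and i: "i \<in> U" and k: "k \<notin> U"
  shows "(wsign {k} U :: 'a::field) * wsign {i} (insert k (U - {i})) = - (wsign {i} (U - {i}) * wsign {k} (U - {i}))"
proof -
  have fU': "finite (U - {i})" using U by simp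
  have Ueq: "U = insert i (U - {i})" using i by auto
  have c1: "card {s\<in>U. s < k} = card {s\<in>U - {i}. s < k} + (if i < k then 1 else 0)"
    by (subst Ueq, rule card_filter_insert) (use fU' in auto)
  have c2: "card {s\<in>insert k (U - {i}). s < i} = card {s\<in>U - {i}. s < i} + (if k < i then 1 else 0)"
    by (rule card_filter_insert) (use fU' k in auto)
  have ik: "i \<noteq> k" using i k by auto
  show ?thesis
    unfolding wsign_singleton_left[OF U] wsign_singleton_left[OF fU'] wsign_singleton_left[OF finite_insert[THEN iffD2, OF fU']] c1 c2
    using ik by (cases "i < k") (auto simp: power_add)
qed

lemma contract_wedge_grade1_apply:
  assumes l: "l \<in> grade 1" and U: "U \<subseteq> top5"
  shows "contract \<phi> (wedge l f) U = (\<Sum>k\<in>top5 - U. \<phi> k * l {k} * f U) +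
    (\<Sum>k\<in>top5 - U. \<Sum>i\<in>U. \<phi> k * l {i} * f (insert k (U - {i})) * (wsign {k} U * wsign {i} (insert k (U - {i}))))"
proof -
  have fU: "finite U" using U finite_subset by blast
  have "contract \<phi> (wedge l f) U = (\<Sum>k\<in>top5 - U. \<phi> k * wsign {k} U * wedge l f (insert k U))"
    using U by (simp add: contract_def)
  also have "\<dots> = (\<Sum>k\<in>top5 - U. \<phi> k * l {k} * f U +
      (\<Sum>i\<in>U. \<phi> k * l {i} * f (insert k (U - {i})) * (wsign {k} U * wsign {i} (insert k (U - {i})))))"
  proof (rule sum.cong[OF refl])
    fix k assume "k \<in> top5 - U"
    then have kU: "k \<notin> U" "k < 5" by auto
    have "insert k U - {k} = U" "\<And>i. i \<in> U \<Longrightarrow> insert k U - {i} = insert k (U - {i})" using kU by auto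
    then have ew: "wedge l f (insert k U) = l {k} * f U * wsign {k} U +
        (\<Sum>i\<in>U. l {i} * f (insert k (U - {i})) * wsign {i} (insert k (U - {i})))"
      using U fU kU by (simp add: wedge_grade1_left_apply[OF l] sum.insert cong: sum.cong)
    have "\<phi> k * wsign {k} U * wedge l f (insert k U) = \<phi> k * l {k} * f U * (wsign {k} U * wsign {k} U) +
        (\<Sum>i\<in>U. \<phi> k * l {i} * f (insert k (U - {i})) * (wsign {k} U * wsign {i} (insert k (U - {i}))))"
      unfolding ew by (simp only: distrib_left sum_distrib_left mult_ac)
    then show "\<phi> k * wsign {k} U * wedge l f (insert k U) = \<phi> k * l {k} * f U +
        (\<Sum>i\<in>U. \<phi> k * l {i} * f (insert k (U - {i})) * (wsign {k} U * wsign {i} (insert k (U - {i}))))"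
      by (simp only: wsign_square mult_1_right)
  qed
  also have "\<dots> = (\<Sum>k\<in>top5 - U. \<phi> k * l {k} * f U) +
      (\<Sum>k\<in>top5 - U. \<Sum>i\<in>U. \<phi> k * l {i} * f (insert k (U - {i})) * (wsign {k} U * wsign {i} (insert k (U - {i}))))"
    by (rule sum.distrib)
  finally show ?thesis .
qed

lemma wedge_grade1_contract_apply:
  assumes l: "l \<in> grade 1" and U: "U \<subseteq> top5"
  shows "wedge l (contract \<phi> f) U = (\<Sum>i\<in>U. \<phi> i * l {i} * f U) +
    (\<Sum>i\<in>U. \<Sum>k\<in>top5 - U. \<phi> k * l {i} * f (insert k (U - {i})) * (wsign {i} (U - {i}) * wsign {k} (U - {i})))"
proof -
  have inner: "l {i} * contract \<phi> f (U - {i}) * wsign {i} (U - {i}) = \<phi> i * l {i} * f U +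
      (\<Sum>k\<in>top5 - U. \<phi> k * l {i} * f (insert k (U - {i})) * (wsign {i} (U - {i}) * wsign {k} (U - {i})))"
    if i: "i \<in> U" for i
  proof -
    have "U - {i} \<subseteq> top5" "top5 - (U - {i}) = insert i (top5 - U)" "i \<notin> top5 - U"
      "insert i (U - {i}) = U"
      using U i by auto
    then have A: "contract \<phi> f (U - {i}) = \<phi> i * wsign {i} (U - {i}) * f U +
        (\<Sum>k\<in>top5 - U. \<phi> k * wsign {k} (U - {i}) * f (insert k (U - {i})))"
      using U by (simp add: contract_def)
    have "l {i} * contract \<phi> f (U - {i}) * wsign {i} (U - {i}) =
        \<phi> i * l {i} * f U * (wsign {i} (U - {i}) * wsign {i} (U - {i})) +
        (\<Sum>k\<in>top5 - U. \<phi> k * l {i} * f (insert k (U - {i})) * (wsign {i} (U - {i}) * wsign {k} (U - {i})))"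
      unfolding A by (simp only: distrib_left distrib_right sum_distrib_left sum_distrib_right mult_ac)
    then show ?thesis by (simp only: wsign_square mult_1_right)
  qed
  have "wedge l (contract \<phi> f) U = (\<Sum>i\<in>U. l {i} * contract \<phi> f (U - {i}) * wsign {i} (U - {i}))"
    using U by (simp add: wedge_grade1_left_apply[OF l])
  then show ?thesis by (simp add: inner sum.distrib)
qed

lemma contract_wedge_grade1:
  assumes l: "l \<in> grade 1" and f: "f \<in> extAlg"
  shows "contract \<phi> (wedge l f) = scaleE (eval_form \<phi> l) f - wedge l (contract \<phi> f)"
proof (rule ext)
  fix U
  show "contract \<phi> (wedge l f) U = (scaleE (eval_form \<phi> l) f - wedge l (contract \<phi> f)) U"
  proof (cases "U \<subseteq> top5")
    case False
    then have "f U = 0" using f by (auto simp: extAlg_def)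
    then show ?thesis using False by (simp add: contract_def wedge_def)
  next
    case True
    have fU: "finite U" using True finite_subset by blast
    define X where "X k i = \<phi> k * l {i} * f (insert k (U - {i}))" for k i
    have "eval_form \<phi> l * f U = (\<Sum>k\<in>top5 - U. \<phi> k * l {k} * f U) + (\<Sum>i\<in>U. \<phi> i * l {i} * f U)"
      unfolding eval_form_def sum_distrib_right using True sum.subset_diff[of U top5] by simp
    moreover have "(\<Sum>k\<in>top5 - U. \<Sum>i\<in>U. X k i * (wsign {k} U * wsign {i} (insert k (U - {i})))) =
        - (\<Sum>i\<in>U. \<Sum>k\<in>top5 - U. X k i * (wsign {i} (U - {i}) * wsign {k} (U - {i})))"
    proof -
      have "(\<Sum>k\<in>top5 - U. \<Sum>i\<in>U. X k i * (wsign {k} U * wsign {i} (insert k (U - {i})))) =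
          (\<Sum>k\<in>top5 - U. \<Sum>i\<in>U. - (X k i * (wsign {i} (U - {i}) * wsign {k} (U - {i}))))"
      proof (intro sum.cong refl)
        fix k i assume "k \<in> top5 - U" "i \<in> U"
        then have "(wsign {k} U :: 'a) * wsign {i} (insert k (U - {i})) = - (wsign {i} (U - {i}) * wsign {k} (U - {i}))"
          using contract_wedge_sign[OF fU, of i k] by simp
        then show "X k i * (wsign {k} U * wsign {i} (insert k (U - {i}))) =
            - (X k i * (wsign {i} (U - {i}) * wsign {k} (U - {i})))"
          by (simp only: mult_minus_right)
      qed
      also have "\<dots> = - (\<Sum>i\<in>U. \<Sum>k\<in>top5 - U. X k i * (wsign {i} (U - {i}) * wsign {k} (U - {i})))"
        by (subst sum.swap) (simp add: sum_negf)
      finally show ?thesis .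
    qed
    ultimately show ?thesis
      using contract_wedge_grade1_apply[OF l True] wedge_grade1_contract_apply[OF l True]
      by (simp add: X_def)
  qed
qed

lemma contract_wedge_grade1_grade1:
  assumes l: "l \<in> grade 1" and m: "m \<in> grade 1"
  shows "contract \<phi> (wedge l m) = scaleE (eval_form \<phi> l) m - scaleE (eval_form \<phi> m) l"
proof -
  have "contract \<phi> (wedge l m) = scaleE (eval_form \<phi> l) m - wedge l (scaleE (eval_form \<phi> m) ext_unit)"
    using contract_wedge_grade1[OF l grade_extAlg[OF m]] contract_grade1[OF m] by simp
  also have "wedge l (scaleE (eval_form \<phi> m) ext_unit) = scaleE (eval_form \<phi> m) l"
    by (simp add: wedge_scale_right wedge_ext_unit_right grade_extAlg[OF l])
  finally show ?thesis .
qed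

lemma wedge_extAlg: "wedge f g \<in> extAlg"
  by (auto simp: wedge_def extAlg_def split: if_splits)

lemma contract_wedge_grade2:
  assumes p: "p \<in> grade 2" and f: "f \<in> extAlg"
  shows "contract \<phi> (wedge p f) = wedge (contract \<phi> p) f + wedge p (contract \<phi> f)"
proof -
  let ?P = "{p. contract \<phi> (wedge p f) = wedge (contract \<phi> p) f + wedge p (contract \<phi> f)}"
  have sub: "E.subspace ?P"
    unfolding E.subspace_def
    by (auto simp: wedge_add_left wedge_scale_left contract_add contract_scale wedge_add_right wedge_scale_right
        add_ac E.scale_right_distrib)
  have gen: "wedge (basis_vec i) (basis_vec j) \<in> ?P" if "i < 5" "j < 5" for i j
  proof -
    have ei: "basis_vec i \<in> grade 1" and ej: "basis_vec j \<in> grade 1" using that basis_vec_grade by auto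
    have "contract \<phi> (wedge (wedge (basis_vec i) (basis_vec j)) f) = contract \<phi> (wedge (basis_vec i) (wedge (basis_vec j) f))"
      by (simp add: wedge_assoc)
    also have "\<dots> = scaleE (\<phi> i) (wedge (basis_vec j) f) - wedge (basis_vec i) (scaleE (\<phi> j) f - wedge (basis_vec j) (contract \<phi> f))"
      using contract_wedge_grade1[OF ei wedge_extAlg[of "basis_vec j" f], of \<phi>] contract_wedge_grade1[OF ej f, of \<phi>]
      by (simp only: eval_form_basis_vec[OF that(1)] eval_form_basis_vec[OF that(2)])
    also have "\<dots> = wedge (scaleE (\<phi> i) (basis_vec j) - scaleE (\<phi> j) (basis_vec i)) f + wedge (wedge (basis_vec i) (basis_vec j)) (contract \<phi> f)"
      by (simp add: wedge_diff_left wedge_diff_right wedge_scale_left wedge_scale_right wedge_assoc)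
    also have "contract \<phi> (wedge (basis_vec i) (basis_vec j)) = scaleE (\<phi> i) (basis_vec j) - scaleE (\<phi> j) (basis_vec i)"
    proof -
      have a1: "contract \<phi> (wedge (basis_vec i) (basis_vec j)) = scaleE (\<phi> i) (basis_vec j) - wedge (basis_vec i) (contract \<phi> (basis_vec j))"
        using contract_wedge_grade1[OF ei grade_extAlg[OF ej], of \<phi>] by (simp only: eval_form_basis_vec[OF that(1)])
      have a2: "contract \<phi> (basis_vec j) = scaleE (\<phi> j) ext_unit"
        using contract_grade1[OF ej, of \<phi>] by (simp only: eval_form_basis_vec[OF that(2)])
      have "contract \<phi> (wedge (basis_vec i) (basis_vec j)) = scaleE (\<phi> i) (basis_vec j) - wedge (basis_vec i) (scaleE (\<phi> j) ext_unit)"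
        unfolding a1 a2 ..
      also have "wedge (basis_vec i) (scaleE (\<phi> j) ext_unit) = scaleE (\<phi> j) (basis_vec i)"
        by (simp add: wedge_scale_right wedge_ext_unit_right grade_extAlg[OF ei])
      finally show ?thesis .
    qed
    ultimately show ?thesis by simp
  qed
  have "p \<in> ?P" by (rule grade2_subspace_induct[OF p sub gen]) simp_all
  then show ?thesis by simp
qed

lemma exists_form_eval_one:
  assumes "a \<in> grade 1" "a \<noteq> 0"
  shows "\<exists>\<phi>. eval_form \<phi> a = 1"
proof -
  have "\<exists>k<5. a {k} \<noteq> 0"
  proof (rule ccontr)
    assume nz: "\<not> (\<exists>k<5. a {k} \<noteq> 0)"
    have "a = (\<Sum>k\<in>top5. scaleE (a {k}) (basis_vec k))" using grade1_expansion[OF assms(1)] by simp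
    also have "\<dots> = 0" using nz by (intro sum.neutral) (auto simp: scaleE_def fun_eq_iff)
    finally show False using assms by simp
  qed
  then obtain k where k: "k < 5" "a {k} \<noteq> 0" by blast
  let ?\<phi> = "\<lambda>i. if i = k then 1 / a {k} else 0"
  have "eval_form ?\<phi> a = (\<Sum>i\<in>top5. if i = k then 1 else 0)"
    unfolding eval_form_def by (intro sum.cong) (auto simp: k)
  also have "\<dots> = 1" using k by simp
  finally show ?thesis by blast
qed

lemma wedge_zero_eq_wedge_contract:
  assumes a: "a \<in> grade 1" and e: "eval_form \<phi> a = 1" and f: "f \<in> extAlg" and z: "wedge a f = 0"
  shows "f = wedge a (contract \<phi> f)"
  using contract_wedge_grade1[OF a f, of \<phi>] z e by simp

lemma wedge_zero_divisible:
  assumes a: "a \<in> grade 1" "a \<noteq> 0" and f: "f \<in> grade (Suc d)" and z: "wedge a f = 0"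
  shows "\<exists>g \<in> grade d. f = wedge a g"
proof -
  obtain \<phi> where "eval_form \<phi> a = 1" using exists_form_eval_one[OF a] by blast
  then show ?thesis using wedge_zero_eq_wedge_contract[OF a(1) _ grade_extAlg[OF f] z] contract_grade[OF f] by blast
qed

lemma wedge_zero_divisible_grade2:
  assumes a: "a \<in> grade 1" "a \<noteq> 0" and f: "f \<in> grade 2" and z: "wedge a f = 0"
  shows "\<exists>g \<in> grade 1. f = wedge a g"
  using wedge_zero_divisible[OF a, of f "Suc 0"] f z by (simp add: numeral_2_eq_2)

lemma exists_separating_form:
  assumes v: "v \<in> grade 1" and S: "S \<subseteq> grade 1" and nv: "v \<notin> E.span S"
  shows "\<exists>\<phi>. eval_form \<phi> v = 1 \<and> (\<forall>s\<in>S. eval_form \<phi> s = 0)"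
proof -
  obtain B where B: "B \<subseteq> S" "\<not> E.dependent B" "S \<subseteq> E.span B"
    using E.maximal_independent_subset[of S] by blast
  have "E.span B \<subseteq> E.span S" using B(1) E.span_mono by blast
  then have vB: "v \<notin> E.span B" using nv by blast
  then have ind: "\<not> E.dependent (insert v B)" using B(2) E.independent_insertI by blast
  obtain g where g: "Vector_Spaces.linear scaleE (*) g" "\<forall>x\<in>insert v B. g x = (if x = v then (1::'a) else 0)"
    using Ek.linear_independent_extend[OF ind, of "\<lambda>x. if x = v then 1 else 0"] by blast
  interpret g: Vector_Spaces.linear scaleE "(*)" g by (rule g(1))
  define \<phi> where "\<phi> k = g (basis_vec k)" for k
  have gl: "g l = eval_form \<phi> l" if "l \<in> grade 1" for l
  proof -
    have "g l = g (\<Sum>k\<in>top5. scaleE (l {k}) (basis_vec k))" using grade1_expansion[OF that] by simp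
    also have "\<dots> = (\<Sum>k\<in>top5. l {k} * \<phi> k)" by (simp add: g.sum g.scale \<phi>_def)
    finally show ?thesis by (simp add: eval_form_def mult.commute)
  qed
  have "v \<notin> B" using vB E.span_base by blast
  have gs: "g s = 0" if "s \<in> S" for s
  proof -
    have "s \<in> E.span B" using that B(3) by blast
    moreover have "\<And>x. x \<in> B \<Longrightarrow> g x = 0" using g(2) \<open>v \<notin> B\<close> by auto
    ultimately show ?thesis using g.eq_0_on_span by blast
  qed
  have "eval_form \<phi> s = 0" if "s \<in> S" for s
  proof -
    have "s \<in> grade 1" using S that by blast
    then show ?thesis using gl gs[OF that] by simp
  qed
  moreover have "eval_form \<phi> v = 1" using gl[OF v] g(2) by simp
  ultimately show ?thesis by blast
qed

lemma in_span_if_wedge_zero: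
  assumes m: "m \<in> grade 1" and S: "S \<subseteq> grade 1" and w: "\<omega> \<in> extAlg" "\<omega> \<noteq> 0"
    and kill: "\<And>\<phi>. (\<forall>s\<in>S. eval_form \<phi> s = 0) \<Longrightarrow> contract \<phi> \<omega> = 0"
    and z: "wedge m \<omega> = 0"
  shows "m \<in> E.span S"
proof (rule ccontr)
  assume "m \<notin> E.span S"
  then obtain \<phi> where \<phi>: "eval_form \<phi> m = 1" "\<forall>s\<in>S. eval_form \<phi> s = 0" using exists_separating_form[OF m S] by blast
  have "contract \<phi> (wedge m \<omega>) = \<omega>" using contract_wedge_grade1[OF m w(1), of \<phi>] \<phi> kill by simp
  then show False using z w(2) by simp
qed

lemma decomposable_if_square_zero:
  assumes two: "(2::'a::field) \<noteq> 0" and p: "(p::'a ext) \<in> grade 2" "p \<noteq> 0" and pp: "wedge p p = 0"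
  shows "\<exists>a b. a \<in> grade 1 \<and> b \<in> grade 1 \<and> p = wedge a b"
proof -
  obtain U where "p U \<noteq> 0" using p(2) by (auto simp: fun_eq_iff)
  then obtain i j where ij: "i < j" "j < 5" "U = {i, j}" "p {i, j} \<noteq> 0"
    using grade2_support[OF p(1)] by blast
  define \<phi> where "\<phi> = (\<lambda>k. if k = i then (1::'a) else 0)"
  define a where "a = contract \<phi> p"
  have a1: "a \<in> grade 1" unfolding a_def using contract_grade2 p(1) by blast
  have "a {j} = (\<Sum>k\<in>top5 - {j}. \<phi> k * wsign {k} {j} * p (insert k {j}))"
    using ij by (simp add: a_def contract_def)
  also have "\<dots> = (\<Sum>k\<in>top5 - {j}. if k = i then p {i, j} else 0)"
  proof (intro sum.cong refl)
    fix k assume "k \<in> top5 - {j}"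
    have e: "{s \<in> {j}. s < i} = {}" using ij by auto
    have "wsign {i} {j} = (1::'a)" by (simp only: wsign_singleton_left[OF finite.insertI[OF finite.emptyI]] e card.empty power_0)
    moreover have "insert i {j} = {i, j}" by simp
    ultimately show "\<phi> k * wsign {k} {j} * p (insert k {j}) = (if k = i then p {i, j} else 0)"
      by (simp add: \<phi>_def)
  qed
  also have "\<dots> = p {i, j}" using ij by simp
  finally have "a \<noteq> 0" using ij by (auto simp: fun_eq_iff)
  have "0 = contract \<phi> (wedge p p)" using pp by simp
  also have "\<dots> = wedge a p + wedge p a" using contract_wedge_grade2[OF p(1) grade_extAlg[OF p(1)]] by (simp add: a_def)
  also have "\<dots> = scaleE 2 (wedge a p)"
  proof -
    have "wedge p a = wedge a p" using wedge_grade1_grade2_commute[OF a1 p(1)] by simp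
    moreover have "scaleE 2 x = x + (x::'a ext)" for x
      unfolding fun_eq_iff scaleE_apply plus_fun_apply by (simp only: mult_2 simp_thms)
    ultimately show ?thesis by simp
  qed
  finally have "wedge a p = 0" using two by (simp add: fun_eq_iff)
  then obtain b where "b \<in> grade 1" "p = wedge a b" using wedge_zero_divisible_grade2[OF a1 \<open>a \<noteq> 0\<close> p(1)] by auto
  then show ?thesis using a1 by blast
qed

section \<open>Coordinates in degrees two and four\<close>

lemma wsign_eq_power_sum: "finite S \<Longrightarrow> wsign S T = (-1::'a::field) ^ (\<Sum>s\<in>S. card {t\<in>T. t < s})"
proof -
  assume "finite S"
  have "{(s, t). s \<in> S \<and> t \<in> T \<and> t < s} = Sigma S (\<lambda>s. {t\<in>T. t<s})" by auto
  moreover have "\<forall>s\<in>S. finite {t\<in>T. t<s}" by (auto intro: finite_subset[of _ "{..<s}" for s])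
  ultimately show ?thesis unfolding wsign_def by (simp only: card_SigmaI[OF \<open>finite S\<close>])
qed

lemma card_filter_doubleton:
  assumes "u \<noteq> w"
  shows "card {t\<in>{u, w}. t < (x::nat)} = (if u < x then 1 else 0) + (if w < x then 1 else 0)"
proof -
  have "{t\<in>{u, w}. t < x} = (if u < x then {u} else {}) \<union> (if w < x then {w} else {})" by auto
  then show ?thesis using assms by simp
qed

lemma wsign_doubletons:
  assumes "x \<noteq> y" "u \<noteq> w"
  shows "wsign {x,y} {u,w} = (-1::'a::field) ^ ((if u < x then 1 else 0) + (if w < x then 1 else 0) +
           ((if u < y then 1 else 0) + (if w < y then 1 else 0)))"
proof -
  have "wsign {x,y} {u,w} = (-1::'a) ^ (\<Sum>s\<in>{x,y}. card {t\<in>{u,w}. t < s})"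
    by (rule wsign_eq_power_sum) simp
  also have "(\<Sum>s\<in>{x,y}. card {t\<in>{u,w}. t < s}) = card {t\<in>{u,w}. t < x} + card {t\<in>{u,w}. t < y}"
    using assms(1) by simp
  finally show ?thesis by (simp only: card_filter_doubleton[OF assms(2)])
qed

lemma wedge_grade2_grade2_apply:
  assumes p: "p \<in> grade 2" and q: "q \<in> grade 2" and o: "a < b" "b < c" "c < d" "d < 5"
  shows "wedge p q {a,b,c,d} = p{a,b}*q{c,d} - p{a,c}*q{b,d} + p{a,d}*q{b,c} + p{b,c}*q{a,d} - p{b,d}*q{a,c} + p{c,d}*q{a,b}"
proof -
  let ?U = "{a,b,c,d}"
  have U: "?U \<subseteq> top5" using o by auto
  have P2: "{S \<in> Pow ?U. card S = 2} = {{a,b},{a,c},{a,d},{b,c},{b,d},{c,d}}"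
  proof
    show "{S \<in> Pow ?U. card S = 2} \<subseteq> {{a,b},{a,c},{a,d},{b,c},{b,d},{c,d}}"
    proof
      fix S assume "S \<in> {S \<in> Pow ?U. card S = 2}"
      then obtain x y where xy: "S = {x, y}" "x \<noteq> y" "x \<in> ?U" "y \<in> ?U" by (auto simp: card_2_iff)
      from xy(3) have "x = a \<or> x = b \<or> x = c \<or> x = d" by simp
      moreover from xy(4) have "y = a \<or> y = b \<or> y = c \<or> y = d" by simp
      ultimately show "S \<in> {{a,b},{a,c},{a,d},{b,c},{b,d},{c,d}}" using xy(1,2)
        by (elim disjE) (simp_all add: insert_commute)
    qed
    show "{{a,b},{a,c},{a,d},{b,c},{b,d},{c,d}} \<subseteq> {S \<in> Pow ?U. card S = 2}" using o by auto
  qed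
  have "wedge p q ?U = (\<Sum>S\<in>Pow ?U. p S * q (?U - S) * wsign S (?U - S))"
    using U by (simp add: wedge_def)
  also have "\<dots> = (\<Sum>S\<in>{S \<in> Pow ?U. card S = 2}. p S * q (?U - S) * wsign S (?U - S))"
    by (rule sum.mono_neutral_right) (auto simp: grade_zero_outside[OF p] intro: finite_subset)
  also have "\<dots> = (\<Sum>S\<in>{{a,b},{a,c},{a,d},{b,c},{b,d},{c,d}}. p S * q (?U - S) * wsign S (?U - S))"
    by (simp only: P2)
  also have "\<dots> = p{a,b}*q{c,d} - p{a,c}*q{b,d} + p{a,d}*q{b,c} + p{b,c}*q{a,d} - p{b,d}*q{a,c} + p{c,d}*q{a,b}"
    using o by (simp add: doubleton_eq_iff insert_Diff_if wsign_doubletons insert_commute)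
  finally show ?thesis .
qed

(* The isomorphism E\<^sub>4 \<cong> E\<^sub>1\<^sup>* induced by the wedge pairing E\<^sub>1 \<times> E\<^sub>4 \<rightarrow> E\<^sub>5 \<cong> k. *)

definition dual_form :: "'a::field ext \<Rightarrow> nat \<Rightarrow> 'a" where
  "dual_form r = (\<lambda>k. wedge (basis_vec k) r top5)"

lemma dual_form_apply: "k < 5 \<Longrightarrow> dual_form r k = r (top5 - {k}) * (-1) ^ k"
proof -
  assume k: "k < 5"
  have "{t \<in> top5 - {k}. t < k} = {0..<k}" using k by auto
  then show ?thesis using k by (simp add: dual_form_def wedge_basis_vec_left_apply wsign_singleton_left)
qed

lemma top5_eq: "top5 = {0,1,2,3,4}" by auto

lemma sum_top5_remove: "j \<in> top5 \<Longrightarrow> (\<Sum>k\<in>top5 - {j}. (g::nat \<Rightarrow> 'a::ab_group_add) k) = g 0 + g 1 + g 2 + g 3 + g 4 - g j"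
proof -
  assume j: "j \<in> top5"
  have A: "(\<Sum>k\<in>top5. g k) = g j + (\<Sum>k\<in>top5 - {j}. g k)" by (rule sum.remove[OF _ j]) simp
  have B: "(\<Sum>k\<in>top5. g k) = g 0 + g 1 + g 2 + g 3 + g 4" by (simp add: top5_eq add.assoc)
  have "(\<Sum>k\<in>top5 - {j}. g k) = (g j + (\<Sum>k\<in>top5 - {j}. g k)) - g j" by simp
  also have "g j + (\<Sum>k\<in>top5 - {j}. g k) = (\<Sum>k\<in>top5. g k)" using A by (rule sym)
  also have "\<dots> = g 0 + g 1 + g 2 + g 3 + g 4" by (rule B)
  finally show ?thesis .
qed

lemma contract_singleton_apply:
  assumes j: "j < 5"
  shows "contract \<phi> q {j} = (\<Sum>k\<in>top5 - {j}. \<phi> k * (if j < k then - q {j,k} else q {k,j}))"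
proof -
  have "contract \<phi> q {j} = (\<Sum>k\<in>top5 - {j}. \<phi> k * wsign {k} {j} * q (insert k {j}))"
    using j by (simp add: contract_def)
  also have "\<dots> = (\<Sum>k\<in>top5 - {j}. \<phi> k * (if j < k then - q {j,k} else q {k,j}))"
  proof (rule sum.cong[OF refl])
    fix k assume k: "k \<in> top5 - {j}"
    show "\<phi> k * wsign {k} {j} * q (insert k {j}) = \<phi> k * (if j < k then - q {j,k} else q {k,j})"
    proof (cases "j < k")
      case True
      then have "{s \<in> {j}. s < k} = {j}" by auto
      then have "wsign {k} {j} = (-1::'a)" by (simp only: wsign_singleton_left[OF finite.insertI[OF finite.emptyI]]) simp
      moreover have "insert k {j} = {j, k}" by auto
      ultimately show ?thesis using True by simp
    next
      case False
      then have "{s \<in> {j}. s < k} = {}" by auto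
      then have "wsign {k} {j} = (1::'a)" by (simp only: wsign_singleton_left[OF finite.insertI[OF finite.emptyI]] card.empty power_0)
      then show ?thesis using False by simp
    qed
  qed
  finally show ?thesis .
qed

lemma contract_grade2_coords:
  "contract \<phi> q {0} = - (\<phi> 1 * q {0,1}) - (\<phi> 2 * q {0,2}) - (\<phi> 3 * q {0,3}) - (\<phi> 4 * q {0,4})"
  "contract \<phi> q {1} = \<phi> 0 * q {0,1} - (\<phi> 2 * q {1,2}) - (\<phi> 3 * q {1,3}) - (\<phi> 4 * q {1,4})"
  "contract \<phi> q {2} = \<phi> 0 * q {0,2} + \<phi> 1 * q {1,2} - (\<phi> 3 * q {2,3}) - (\<phi> 4 * q {2,4})"
  "contract \<phi> q {3} = \<phi> 0 * q {0,3} + \<phi> 1 * q {1,3} + \<phi> 2 * q {2,3} - (\<phi> 4 * q {3,4})"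
  "contract \<phi> q {4} = \<phi> 0 * q {0,4} + \<phi> 1 * q {1,4} + \<phi> 2 * q {2,4} + \<phi> 3 * q {3,4}"
  by (simp_all add: contract_singleton_apply sum_top5_remove algebra_simps)

lemma dual_form_coords: "dual_form r 0 = r {1,2,3,4}" "dual_form r 1 = - r {0,2,3,4}" "dual_form r 2 = r {0,1,3,4}"
     "dual_form r 3 = - r {0,1,2,4}" "dual_form r 4 = r {0,1,2,3}"
proof -
  have d: "top5 - {0} = {1,2,3,4}" "top5 - {1} = {0,2,3,4}" "top5 - {2} = {0,1,3,4}"
     "top5 - {3} = {0,1,2,4}" "top5 - {4} = {0,1,2,3}" by auto
  show "dual_form r 0 = r {1,2,3,4}" using dual_form_apply[of 0 r] d(1) by simp
  show "dual_form r 1 = - r {0,2,3,4}" using dual_form_apply[of 1 r] d(2) by simp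
  show "dual_form r 2 = r {0,1,3,4}" using dual_form_apply[of 2 r] d(3) by simp
  show "dual_form r 3 = - r {0,1,2,4}" using dual_form_apply[of 3 r] d(4) by simp
  show "dual_form r 4 = r {0,1,2,3}" using dual_form_apply[of 4 r] d(5) by simp
qed

lemma wedge_grade2_grade2_coords:
  assumes p: "p \<in> grade 2" and q: "q \<in> grade 2"
  shows
    "wedge p q {1,2,3,4} = p{1,2}*q{3,4} - p{1,3}*q{2,4} + p{1,4}*q{2,3} + p{2,3}*q{1,4} - p{2,4}*q{1,3} + p{3,4}*q{1,2}"
    "wedge p q {0,2,3,4} = p{0,2}*q{3,4} - p{0,3}*q{2,4} + p{0,4}*q{2,3} + p{2,3}*q{0,4} - p{2,4}*q{0,3} + p{3,4}*q{0,2}"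
    "wedge p q {0,1,3,4} = p{0,1}*q{3,4} - p{0,3}*q{1,4} + p{0,4}*q{1,3} + p{1,3}*q{0,4} - p{1,4}*q{0,3} + p{3,4}*q{0,1}"
    "wedge p q {0,1,2,4} = p{0,1}*q{2,4} - p{0,2}*q{1,4} + p{0,4}*q{1,2} + p{1,2}*q{0,4} - p{1,4}*q{0,2} + p{2,4}*q{0,1}"
    "wedge p q {0,1,2,3} = p{0,1}*q{2,3} - p{0,2}*q{1,3} + p{0,3}*q{1,2} + p{1,2}*q{0,3} - p{1,3}*q{0,2} + p{2,3}*q{0,1}"
  using wedge_grade2_grade2_apply[OF p q, of 1 2 3 4] wedge_grade2_grade2_apply[OF p q, of 0 2 3 4] wedge_grade2_grade2_apply[OF p q, of 0 1 3 4]
    wedge_grade2_grade2_apply[OF p q, of 0 1 2 4] wedge_grade2_grade2_apply[OF p q, of 0 1 2 3] by simp_all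

lemma contract_dual_form_square:
  assumes p: "p \<in> grade 2" and q: "q \<in> grade 2" and j: "j < 5"
  shows "contract (dual_form (wedge p p)) q {j} = -2 * contract (dual_form (wedge p q)) p {j}"
proof -
  note coords = contract_grade2_coords dual_form_coords
    wedge_grade2_grade2_coords[OF p p] wedge_grade2_grade2_coords[OF p q]
  have "j = 0 \<or> j = 1 \<or> j = 2 \<or> j = 3 \<or> j = 4" using j by auto
  then show ?thesis
  proof (elim disjE)
    assume j_eq: "j = 0" show ?thesis unfolding j_eq coords by algebra
  next
    assume j_eq: "j = 1" show ?thesis unfolding j_eq coords by algebra
  next
    assume j_eq: "j = 2" show ?thesis unfolding j_eq coords by algebra
  next
    assume j_eq: "j = 3" show ?thesis unfolding j_eq coords by algebra
  next
    assume j_eq: "j = 4" show ?thesis unfolding j_eq coords by algebra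
  qed
qed

section \<open>Duality between quadrics and cubics\<close>

lemma dim_le_kernel_plus_image:
  assumes S: "E.subspace S" and B0: "finite B0" "S \<subseteq> E.span B0"
    and F: "Vector_Spaces.linear scaleE scaleE F"
  shows "E.dim (S :: 'a::field ext set) \<le> E.dim {x\<in>S. F x = 0} + E.dim (F ` S)"
proof -
  interpret F: Vector_Spaces.linear scaleE scaleE F by (rule F)
  define K where "K = {x\<in>S. F x = 0}"
  obtain BK where BK: "BK \<subseteq> K" "\<not> E.dependent BK" "K \<subseteq> E.span BK" "card BK = E.dim K"
    using E.basis_exists by blast
  obtain BI where BI: "BI \<subseteq> F ` S" "\<not> E.dependent BI" "F ` S \<subseteq> E.span BI" "card BI = E.dim (F ` S)"
    using E.basis_exists by blast
  have "F ` S \<subseteq> E.span (F ` B0)" using B0(2) F.span_image by blast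
  then have fBI: "finite BI" using E.independent_span_bound[OF finite_imageI[OF B0(1)] BI(2)] BI(1) by blast
  have "BK \<subseteq> E.span B0" using BK(1) B0(2) K_def by auto
  then have fBK: "finite BK" using E.independent_span_bound[OF B0(1) BK(2)] by blast
  have "\<forall>y\<in>BI. \<exists>x. x \<in> S \<and> F x = y" using BI(1) by blast
  then obtain g where g: "\<And>y. y \<in> BI \<Longrightarrow> g y \<in> S \<and> F (g y) = y" by metis
  define G where "G = g ` BI"
  have GS: "G \<subseteq> S" using g by (auto simp: G_def)
  have FG: "F ` G = BI" using g by (force simp: G_def image_image)
  have "S \<subseteq> E.span (BK \<union> G)"
  proof
    fix s assume s: "s \<in> S"
    have "F s \<in> E.span BI" using BI(3) s by blast
    also have "E.span BI = F ` E.span G" using F.span_image[of G] FG by simp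
    finally have "F s \<in> F ` E.span G" .
    then obtain s' where s': "s' \<in> E.span G" "F s' = F s" by (metis imageE)
    have "s' \<in> S" using s' GS E.span_minimal S by blast
    then have "s - s' \<in> K" using s s' S by (auto simp: K_def F.diff E.subspace_diff)
    then have "s - s' \<in> E.span (BK \<union> G)" using BK(3) E.span_mono[of BK "BK \<union> G"] by blast
    moreover have "s' \<in> E.span (BK \<union> G)" using s'(1) E.span_mono[of G "BK \<union> G"] by blast
    ultimately have "(s - s') + s' \<in> E.span (BK \<union> G)" by (rule E.span_add)
    then show "s \<in> E.span (BK \<union> G)" by simp
  qed
  then have "E.dim S \<le> card (BK \<union> G)" using E.dim_le_card fBK fBI G_def by blast
  also have "\<dots> \<le> card BK + card G" by (rule card_Un_le)
  also have "card G \<le> card BI" unfolding G_def by (rule card_image_le[OF fBI])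
  finally show ?thesis using BK(4) BI(4) K_def by simp
qed

lemma independent_pair_coeffs:
  assumes ind: "\<not> E.dependent {u, v}" and uv: "u \<noteq> v"
    and z: "scaleE \<alpha> u + scaleE \<beta> v = (0::'a::field ext)"
  shows "\<alpha> = 0 \<and> \<beta> = 0"
proof (rule ccontr)
  assume "\<not> (\<alpha> = 0 \<and> \<beta> = 0)"
  let ?c = "\<lambda>x. if x = u then \<alpha> else \<beta>"
  have s1: "(\<Sum>x\<in>{u, v}. scaleE (?c x) x) = scaleE (?c u) u + scaleE (?c v) v"
    using uv by (simp only: sum.insert[OF finite.insertI[OF finite.emptyI]] sum.insert[OF finite.emptyI]
       insert_iff empty_iff simp_thms sum.empty add_0_right)
  have "?c u = \<alpha>" "?c v = \<beta>" using uv by auto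
  then have F1: "(\<Sum>x\<in>{u, v}. scaleE (?c x) x) = 0" using s1 z by simp
  have F2: "\<exists>x\<in>{u, v}. ?c x \<noteq> 0" using \<open>\<not> (\<alpha> = 0 \<and> \<beta> = 0)\<close> uv by auto
  have fin2: "finite {u, v}" by simp
  have "\<exists>c. (\<exists>x\<in>{u, v}. c x \<noteq> 0) \<and> (\<Sum>x\<in>{u, v}. scaleE (c x) x) = 0"
    by (rule exI[of _ ?c], rule conjI[OF F2 F1])
  then have "E.dependent {u, v}" unfolding E.dependent_finite[OF fin2] .
  then show False using ind by simp
qed

lemma independent_pair_exists:
  assumes "2 \<le> E.dim (K :: 'a::field ext set)"
  obtains u v where "u \<in> K" "v \<in> K" "u \<noteq> v" "\<not> E.dependent {u, v}"
proof -
  obtain B where B: "B \<subseteq> K" "\<not> E.dependent B" "K \<subseteq> E.span B" "card B = E.dim K"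
    by (rule E.basis_exists)
  have "2 \<le> card B" using B(4) assms by simp
  then obtain C where C: "C \<subseteq> B" "card C = 2" by (rule obtain_subset_with_card_n)
  then obtain u v where uv: "C = {u, v}" "u \<noteq> v" by (meson card_2_iff)
  have "\<not> E.dependent {u, v}" using E.independent_mono[OF B(2)] C(1) uv(1) by blast
  moreover have "u \<in> K" "v \<in> K" using B(1) C(1) uv(1) by auto
  ultimately show ?thesis using that uv(2) by blast
qed

(* The annihilator of T under the perfect pairing E\<^sub>2 \<times> E\<^sub>3 \<rightarrow> E\<^sub>5 \<cong> k. *)

definition top_annihilator :: "'a::field ext set \<Rightarrow> 'a ext set" where
  "top_annihilator T = {p \<in> grade 2. \<forall>t\<in>T. wedge p t top5 = 0}"

lemma subspace_top_annihilator: "E.subspace (top_annihilator T)"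
  using grade_subspace[of 2]
  by (auto simp: top_annihilator_def E.subspace_def wedge_add_left wedge_scale_left)

lemma dim_top_annihilator:
  assumes T: "T \<subseteq> grade 3"
  shows "10 \<le> E.dim (top_annihilator T :: 'a::field ext set) + E.dim T"
proof -
  obtain BT where BT: "BT \<subseteq> T" "\<not> E.dependent BT" "T \<subseteq> E.span BT" "card BT = E.dim T"
    by (rule E.basis_exists)
  have fBT: "finite BT" using independent_in_grade_bound(1)[OF _ BT(2)] BT(1) T by blast
  define F where "F p = (\<Sum>t\<in>BT. scaleE (wedge p t top5) t)" for p :: "'a ext"
  have linF: "Vector_Spaces.linear scaleE scaleE F"
    by (simp add: Vector_Spaces.linear_iff vector_space_scaleE F_def wedge_add_left wedge_scale_left
        sum.distrib E.scale_left_distrib E.scale_sum_right)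
  have kernel: "{p \<in> grade 2. F p = 0} = top_annihilator T"
  proof (intro equalityI subsetI; clarify)
    fix p :: "'a ext" assume "p \<in> top_annihilator T"
    then show "p \<in> grade 2 \<and> F p = 0"
      using BT(1) by (auto simp: top_annihilator_def F_def intro!: sum.neutral)
  next
    fix p :: "'a ext" assume p: "p \<in> grade 2" "F p = 0"
    have "\<forall>t\<in>BT. wedge p t top5 = 0"
    proof (rule ccontr)
      assume "\<not> (\<forall>t\<in>BT. wedge p t top5 = 0)"
      then have "\<exists>t\<in>BT. wedge p t top5 \<noteq> 0" by blast
      with p(2) have "\<exists>u. (\<exists>t\<in>BT. u t \<noteq> 0) \<and> (\<Sum>t\<in>BT. scaleE (u t) t) = 0"
        unfolding F_def by (intro exI[of _ "\<lambda>t. wedge p t top5"]) simp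
      then show False using BT(2) unfolding E.dependent_finite[OF fBT] by simp
    qed
    moreover have "Vector_Spaces.linear scaleE ((*)::'a \<Rightarrow> 'a \<Rightarrow> 'a) (\<lambda>t. wedge p t top5)"
      by (simp add: Vector_Spaces.linear_iff vector_space_scaleE vector_space_mult
          wedge_add_right wedge_scale_right)
    ultimately have "\<forall>t\<in>T. wedge p t top5 = 0"
      using BT(3) Ek.linear_eq_0_on_span by blast
    then show "p \<in> top_annihilator T" using p(1) by (simp add: top_annihilator_def)
  qed
  have "F p \<in> E.span BT" for p
    unfolding F_def by (rule E.span_sum, rule E.span_scale, rule E.span_base, assumption)
  then have "F ` grade 2 \<subseteq> E.span BT" by blast
  then have "E.dim (F ` grade 2) \<le> E.dim T" using E.dim_le_card[OF _ fBT] BT(4) by simp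
  moreover have "E.dim (grade 2 :: 'a ext set) \<le> E.dim {p \<in> grade 2. F p = 0} + E.dim (F ` grade 2)"
    by (rule dim_le_kernel_plus_image[OF grade_subspace finite_monomials grade_span linF])
  ultimately show ?thesis using dim_grade[of 2, where 'a='a] choose_5 unfolding kernel by linarith
qed

lemma grade4_support:
  assumes r: "r \<in> grade 4" "r U \<noteq> 0"
  shows "\<exists>k<5. U = top5 - {k}"
proof -
  have U: "U \<subseteq> top5" "card U = 4" using r by (auto simp: grade_def)
  have "card (top5 - U) = 1" using U by (simp add: card_Diff_subset finite_subset)
  then obtain k where k: "top5 - U = {k}" by (auto simp: card_Suc_eq)
  then have "U = top5 - {k}" "k < 5" using U by auto
  then show ?thesis by blast
qed

lemma grade4_eq_zero:
  assumes r: "r \<in> grade 4" and z: "\<And>k. k < 5 \<Longrightarrow> dual_form r k = 0"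
  shows "r = 0"
proof (rule ext, rule ccontr)
  fix U assume "r U \<noteq> 0 U"
  then have "r U \<noteq> 0" by simp
  then obtain k where k: "k < 5" "U = top5 - {k}" using grade4_support[OF r(1)] by blast
  then have "dual_form r k = r U * (-1)^k" by (simp add: dual_form_apply)
  then show False using z[OF k(1)] \<open>r U \<noteq> 0\<close> by simp
qed

lemma wedge_zero_if_top_pairing_zero:
  assumes p: "p \<in> grade 2" and q: "q \<in> grade 2"
    and z: "\<And>l. l \<in> grade 1 \<Longrightarrow> wedge p (wedge l q) top5 = 0"
  shows "wedge p q = 0"
proof (rule grade4_eq_zero)
  show "wedge p q \<in> grade 4" using wedge_grade[OF p q] by simp
  fix k :: nat assume k: "k < 5"
  have "wedge p (wedge (basis_vec k) q) = wedge (basis_vec k) (wedge p q)"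
    using wedge_grade1_grade2_commute[OF basis_vec_grade[OF k] p] by (simp add: wedge_assoc[symmetric])
  then show "dual_form (wedge p q) k = 0" using z[OF basis_vec_grade[OF k]] by (simp add: dual_form_def)
qed

lemma wedge_top_annihilator_eq_zero:
  assumes "p \<in> top_annihilator T" "q \<in> grade 2" "\<And>l. l \<in> grade 1 \<Longrightarrow> wedge l q \<in> T"
  shows "wedge p q = 0"
  using assms by (intro wedge_zero_if_top_pairing_zero) (auto simp: top_annihilator_def)

section \<open>Quadrics annihilated by a quadric of rank four\<close>

lemma subspace_wedge2: "E.subspace (wedge2 V)"
  by (simp add: wedge2_def)

definition form_kernel :: "(nat \<Rightarrow> 'a) \<Rightarrow> 'a::field ext set" where
  "form_kernel \<phi> = {l \<in> grade 1. eval_form \<phi> l = 0}"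

lemma subspace_form_kernel: "E.subspace (form_kernel \<phi>)"
  using grade_subspace[of 1] by (auto simp: form_kernel_def E.subspace_def eval_form_add eval_form_scale)

lemma dim_form_kernel:
  assumes z: "z \<in> grade 1" "eval_form \<phi> z = 1"
  shows "E.dim (form_kernel \<phi>) = 4"
proof (rule antisym)
  define F where "F l = scaleE (eval_form \<phi> l) z" for l
  have linF: "Vector_Spaces.linear scaleE scaleE F"
    by (simp add: Vector_Spaces.linear_iff vector_space_scaleE F_def eval_form_add eval_form_scale
        E.scale_left_distrib)
  have "z \<noteq> 0" using z(2) by auto
  then have "{l \<in> grade 1. F l = 0} = form_kernel \<phi>" by (auto simp: form_kernel_def F_def)
  moreover have "E.dim (grade 1 :: 'a ext set) \<le> E.dim {l \<in> grade 1. F l = 0} + E.dim (F ` grade 1)"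
    by (rule dim_le_kernel_plus_image[OF grade_subspace finite_monomials grade_span linF])
  ultimately have "E.dim (grade 1 :: 'a ext set) \<le> E.dim (form_kernel \<phi>) + E.dim (F ` grade 1)"
    by simp
  moreover have "F ` grade 1 \<subseteq> E.span {z}" by (auto simp: F_def intro: E.span_scale E.span_base)
  then have "E.dim (F ` grade 1) \<le> 1" using E.dim_le_card[of "F ` grade 1" "{z}"] by simp
  ultimately show "4 \<le> E.dim (form_kernel \<phi>)" using dim_grade[of 1, where 'a='a] choose_5 by linarith
next
  obtain B where B: "B \<subseteq> form_kernel \<phi>" "\<not> E.dependent B" "form_kernel \<phi> \<subseteq> E.span B"
    "card B = E.dim (form_kernel \<phi>)"
    by (rule E.basis_exists)
  have "E.span B \<subseteq> form_kernel \<phi>" using B(1) E.span_minimal subspace_form_kernel by blast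
  then have zB: "z \<notin> E.span B" using z(2) by (auto simp: form_kernel_def)
  then have "\<not> E.dependent (insert z B)" using E.independent_insertI B(2) by blast
  moreover have "insert z B \<subseteq> grade 1" using z(1) B(1) by (auto simp: form_kernel_def)
  ultimately have "finite (insert z B)" "card (insert z B) \<le> 5"
    using independent_in_grade_bound[of "insert z B" 1] choose_5 by auto
  moreover have "z \<notin> B" using zB E.span_base by blast
  ultimately show "E.dim (form_kernel \<phi>) \<le> 4" using B(4) by simp
qed

lemma wedge2_form_kernel_projection:
  assumes z: "z \<in> grade 1" "eval_form \<phi> z = 1" and q: "q \<in> grade 2"
  shows "q - wedge z (contract \<phi> q) \<in> wedge2 (form_kernel \<phi>)"
proof -
  let ?P = "{q. q - wedge z (contract \<phi> q) \<in> wedge2 (form_kernel \<phi>)}"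
  have "E.subspace ?P"
    using subspace_wedge2[of "form_kernel \<phi>"]
    by (auto simp: E.subspace_def contract_add contract_scale wedge_add_right wedge_scale_right
        add_diff_add E.scale_right_diff_distrib[symmetric])
  moreover have "wedge l m \<in> ?P" if l: "l \<in> grade 1" and m: "m \<in> grade 1" for l m
  proof -
    define pl where "pl = l - scaleE (eval_form \<phi> l) z"
    define pm where "pm = m - scaleE (eval_form \<phi> m) z"
    have "pl \<in> form_kernel \<phi>" "pm \<in> form_kernel \<phi>" unfolding pl_def pm_def form_kernel_def
      using E.subspace_diff[OF grade_subspace _ E.subspace_scale[OF grade_subspace z(1)]] l m z(2)
      by (simp_all add: eval_form_diff eval_form_scale)
    then have "wedge pl pm \<in> wedge2 (form_kernel \<phi>)" unfolding wedge2_def by (intro E.span_base) blast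
    moreover have "wedge pl pm = wedge l m - scaleE (eval_form \<phi> m) (wedge l z)
        - scaleE (eval_form \<phi> l) (wedge z m) + scaleE (eval_form \<phi> l * eval_form \<phi> m) (wedge z z)"
      unfolding pl_def pm_def wedge_diff_left wedge_diff_right wedge_scale_left wedge_scale_right
      by (rule ext) (simp only: minus_apply plus_fun_apply scaleE_apply; algebra)
    moreover have "\<dots> = wedge l m - wedge z (contract \<phi> (wedge l m))"
      using wedge_grade1_self[OF z(1)] wedge_anticomm[OF l z(1)]
      by (simp add: contract_wedge_grade1_grade1[OF l m] wedge_diff_right wedge_scale_right)
    ultimately show ?thesis by simp
  qed
  ultimately have "q \<in> ?P"
    by (rule grade2_subspace_induct[OF q]) (rule basis_vec_grade, linarith)+
  then show ?thesis by simp
qed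

lemma contract_dual_form_square_eq_zero:
  assumes p: "p \<in> grade 2" and q: "q \<in> grade 2" and pq: "wedge p q = 0"
  shows "contract (dual_form (wedge p p)) q = 0"
proof (rule grade1_eq_zero)
  show "contract (dual_form (wedge p p)) q \<in> grade 1" using contract_grade2 q by blast
  fix j :: nat assume j: "j < 5"
  have "dual_form (wedge p q) = (\<lambda>k. 0)" unfolding dual_form_def pq by simp
  then show "contract (dual_form (wedge p p)) q {j} = 0"
    using contract_dual_form_square[OF p q j] by (simp add: contract_def)
qed

lemma annihilated_in_wedge2_hyperplane:
  assumes p: "p \<in> grade 2" "wedge p p \<noteq> 0" and W: "W \<subseteq> grade 2" "\<And>q. q \<in> W \<Longrightarrow> wedge p q = 0"
  shows "\<exists>V. V \<subseteq> grade 1 \<and> E.subspace V \<and> E.dim V = 4 \<and> W \<subseteq> wedge2 (V :: 'a::field ext set)"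
proof -
  define \<phi> where "\<phi> = dual_form (wedge p p)"
  obtain k where k: "k < 5" "\<phi> k \<noteq> 0"
    using grade4_eq_zero[of "wedge p p"] wedge_grade[OF p(1) p(1)] p(2) unfolding \<phi>_def by auto
  define z where "z = scaleE (1 / \<phi> k) (basis_vec k)"
  have z: "z \<in> grade 1" "eval_form \<phi> z = 1"
    using E.subspace_scale[OF grade_subspace basis_vec_grade[OF k(1)]] k
    by (simp_all add: z_def eval_form_scale eval_form_basis_vec)
  have "W \<subseteq> wedge2 (form_kernel \<phi>)"
    using wedge2_form_kernel_projection[OF z] contract_dual_form_square_eq_zero[OF p(1)] W
    unfolding \<phi>_def by fastforce
  moreover have "form_kernel \<phi> \<subseteq> grade 1" by (auto simp: form_kernel_def)
  ultimately show ?thesis using subspace_form_kernel dim_form_kernel[OF z] by blast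
qed

section \<open>Pencils of decomposable quadrics\<close>

lemma wedge_grade1_self_left:
  assumes a: "a \<in> grade 1" shows "wedge a (wedge a f) = 0"
  by (simp add: wedge_assoc[symmetric] wedge_grade1_self[OF a])

lemma contract_wedge_zero:
  assumes c: "c \<in> grade 1" and d: "d \<in> grade 1" and "eval_form \<phi> c = 0" "eval_form \<phi> d = 0"
  shows "contract \<phi> (wedge c d) = 0"
  using contract_wedge_grade1_grade1[OF c d] assms by simp

lemma span_pair_wedge_zero:
  assumes c: "c \<in> grade 1" and d: "d \<in> grade 1" and y: "y \<in> E.span {c, d}"
  shows "wedge y (wedge c d) = 0"
proof -
  have sub: "E.subspace {y. wedge y (wedge c d) = 0}"
    by (auto simp: E.subspace_def wedge_add_left wedge_scale_left)
  have "wedge c (wedge c d) = 0" by (rule wedge_grade1_self_left[OF c])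
  moreover have "wedge d (wedge c d) = 0"
    using wedge_anticomm[OF c d] wedge_grade1_self_left[OF d] by (simp add: wedge_minus_right)
  ultimately have "{c, d} \<subseteq> {y. wedge y (wedge c d) = 0}" by auto
  then show ?thesis using E.span_minimal[OF _ sub] y by blast
qed

lemma wedge_grade2_commute:
  assumes p: "p \<in> grade 2" and q: "q \<in> grade 2"
  shows "wedge p q = wedge q p"
proof -
  have "E.subspace {p. wedge p q = wedge q p}"
    by (auto simp: E.subspace_def wedge_add_left wedge_add_right wedge_scale_left wedge_scale_right)
  moreover have "wedge (basis_vec i) (basis_vec j) \<in> {p. wedge p q = wedge q p}" if "i < j" "j < 5" for i j
  proof -
    have ei: "basis_vec i \<in> grade 1" and ej: "basis_vec j \<in> grade 1"
      by (rule basis_vec_grade, use that in linarith)+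
    have "wedge (wedge (basis_vec i) (basis_vec j)) q = wedge (wedge (basis_vec i) q) (basis_vec j)"
      by (simp add: wedge_assoc wedge_grade1_grade2_commute[OF ej q])
    also have "\<dots> = wedge q (wedge (basis_vec i) (basis_vec j))"
      by (simp add: wedge_assoc wedge_grade1_grade2_commute[OF ei q])
    finally show ?thesis by simp
  qed
  ultimately have "p \<in> {p. wedge p q = wedge q p}" by (rule grade2_subspace_induct[OF p])
  then show ?thesis by simp
qed

lemma wedge_eq_zero_if_squares_zero:
  assumes two: "(2::'a::field) \<noteq> 0" and p: "p1 \<in> grade 2" "p2 \<in> grade 2"
    and sq: "wedge p1 p1 = 0" "wedge p2 p2 = 0" "wedge (p1 + p2) (p1 + p2) = (0::'a ext)"
  shows "wedge p1 p2 = 0"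
proof -
  have "0 = wedge (p1 + p2) (p1 + p2)" using sq(3) by simp
  also have "\<dots> = scaleE 2 (wedge p1 p2)"
    unfolding wedge_add_left wedge_add_right sq(1,2) wedge_grade2_commute[OF p(2) p(1)]
    by (rule ext) (simp only: plus_fun_apply scaleE_apply zero_fun_apply; algebra)
  finally show ?thesis using two by (simp add: fun_eq_iff)
qed

lemma common_linear_factor:
  assumes ab: "a \<in> grade 1" "b \<in> grade 1" "wedge a b \<noteq> 0" and cd: "c \<in> grade 1" "d \<in> grade 1"
    and z: "wedge (wedge a b) (wedge c d) = 0"
  obtains x where "x \<in> grade 1" "x \<noteq> 0" "wedge x (wedge a b) = 0" "wedge x (wedge c d) = 0"
proof (cases "wedge a (wedge c d) = 0")
  case True
  have "a \<noteq> 0" using ab(3) by auto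
  then show ?thesis using that ab(1) True wedge_grade1_self_left[OF ab(1)] by blast
next
  case False
  have "wedge b (wedge a (wedge c d)) = - wedge (wedge a b) (wedge c d)"
    using wedge_anticomm[OF ab(2) ab(1)] by (simp add: wedge_assoc[symmetric] wedge_minus_left)
  then have z': "wedge b (wedge a (wedge c d)) = 0" using z by simp
  have "b \<in> E.span {a, c, d}"
  proof (rule in_span_if_wedge_zero[OF ab(2) _ wedge_extAlg False _ z'])
    show "{a, c, d} \<subseteq> grade 1" using ab cd by auto
    fix \<phi> assume "\<forall>s\<in>{a, c, d}. eval_form \<phi> s = 0"
    then show "contract \<phi> (wedge a (wedge c d)) = 0"
      using contract_wedge_grade1[OF ab(1) wedge_extAlg, of \<phi> c d] contract_wedge_zero[OF cd] by simp
  qed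
  then obtain \<alpha> where \<alpha>: "b - scaleE \<alpha> a \<in> E.span {c, d}" using E.span_breakdown_eq by blast
  define y where "y = b - scaleE \<alpha> a"
  have y1: "y \<in> grade 1" unfolding y_def
    by (rule E.subspace_diff[OF grade_subspace ab(2) E.subspace_scale[OF grade_subspace ab(1)]])
  have "y \<noteq> 0"
  proof
    assume "y = 0"
    then have "b = scaleE \<alpha> a" by (simp add: y_def)
    then show False using ab(3) wedge_grade1_self[OF ab(1)] by (simp add: wedge_scale_right)
  qed
  moreover have "wedge y (wedge a b) = 0"
  proof -
    have "wedge y (wedge a b) = wedge b (wedge a b) - scaleE \<alpha> (wedge a (wedge a b))"
      by (simp add: y_def wedge_diff_left wedge_scale_left)
    also have "wedge b (wedge a b) = 0"
      using wedge_anticomm[OF ab(2) ab(1)] wedge_grade1_self[OF ab(2)]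
      by (simp add: wedge_assoc[symmetric] wedge_minus_left wedge_assoc)
    finally show ?thesis using wedge_grade1_self_left[OF ab(1)] by (simp add: fun_eq_iff)
  qed
  moreover have "wedge y (wedge c d) = 0" using span_pair_wedge_zero[OF cd] \<alpha> by (simp add: y_def)
  ultimately show ?thesis using that y1 by blast
qed

lemma pencil_common_factor:
  assumes two: "(2::'a::field) \<noteq> 0"
    and p: "p1 \<in> grade 2" "p2 \<in> grade 2" "p1 \<noteq> 0" "p2 \<noteq> 0"
    and sq: "wedge p1 p1 = 0" "wedge p2 p2 = 0" "wedge (p1 + p2) (p1 + p2) = (0::'a ext)"
  obtains x b c where "x \<in> grade 1" "x \<noteq> 0" "b \<in> grade 1" "c \<in> grade 1"
    "p1 = wedge x b" "p2 = wedge x c"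
proof -
  obtain a b where ab: "a \<in> grade 1" "b \<in> grade 1" "p1 = wedge a b"
    using decomposable_if_square_zero[OF two p(1,3) sq(1)] by blast
  obtain c d where cd: "c \<in> grade 1" "d \<in> grade 1" "p2 = wedge c d"
    using decomposable_if_square_zero[OF two p(2,4) sq(2)] by blast
  have "wedge p1 p2 = 0" by (rule wedge_eq_zero_if_squares_zero[OF two p(1,2) sq])
  then have "wedge (wedge a b) (wedge c d) = 0" using ab(3) cd(3) by simp
  moreover have "wedge a b \<noteq> 0" using ab(3) p(3) by simp
  ultimately obtain x where x: "x \<in> grade 1" "x \<noteq> 0" "wedge x p1 = 0" "wedge x p2 = 0"
    using common_linear_factor[OF ab(1,2) _ cd(1,2)] ab(3) cd(3) by blast
  obtain b' where b': "b' \<in> grade 1" "p1 = wedge x b'"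
    using wedge_zero_divisible_grade2[OF x(1,2) p(1) x(3)] by blast
  obtain c' where c': "c' \<in> grade 1" "p2 = wedge x c'"
    using wedge_zero_divisible_grade2[OF x(1,2) p(2) x(4)] by blast
  show thesis by (rule that[OF x(1,2) b'(1) c'(1) b'(2) c'(2)])
qed

lemma wedge_factors_independent:
  assumes x: "x \<in> grade 1" "x \<noteq> 0" and b: "b \<in> grade 1" and c: "c \<in> grade 1"
    and ind: "wedge x b \<noteq> wedge x c" "\<not> E.dependent {wedge x b, wedge x c}"
  shows "wedge b c \<noteq> 0" "x \<notin> E.span {b, c}"
proof -
  have "wedge x b \<noteq> 0"
  proof
    assume "wedge x b = 0"
    then have "E.dependent {wedge x b, wedge x c}" by (intro E.dependent_zero) simp
    then show False using ind(2) by contradiction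
  qed
  then have bnz: "b \<noteq> 0" by auto
  show "wedge b c \<noteq> 0"
  proof
    assume bc0: "wedge b c = 0"
    have "c \<in> E.span {b}"
    proof (rule in_span_if_wedge_zero[OF c _ grade_extAlg[OF b] bnz])
      show "{b} \<subseteq> grade 1" using b by auto
      show "\<And>\<phi>. \<forall>s\<in>{b}. eval_form \<phi> s = 0 \<Longrightarrow> contract \<phi> b = 0" using contract_grade1[OF b] by simp
      show "wedge c b = 0" using wedge_anticomm[OF c b] bc0 by simp
    qed
    then obtain \<beta> where "c = scaleE \<beta> b" using E.span_singleton by auto
    then have "wedge x c = scaleE \<beta> (wedge x b)" by (simp add: wedge_scale_right)
    then have "scaleE \<beta> (wedge x b) + scaleE (-1) (wedge x c) = 0" by (simp add: fun_eq_iff)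
    then show False using independent_pair_coeffs[OF ind(2,1), of \<beta> "-1"] by simp
  qed
  show "x \<notin> E.span {b, c}"
  proof
    assume "x \<in> E.span {b, c}"
    then obtain \<beta> where "x - scaleE \<beta> b \<in> E.span {c}" using E.span_breakdown_eq by blast
    then obtain \<gamma> where "x - scaleE \<beta> b = scaleE \<gamma> c" using E.span_singleton by auto
    then have xe: "x = scaleE \<beta> b + scaleE \<gamma> c" by (simp add: diff_eq_eq add.commute)
    have xb: "wedge x b = scaleE \<gamma> (wedge c b)" and xc: "wedge x c = scaleE \<beta> (wedge b c)"
      using xe wedge_grade1_self[OF b] wedge_grade1_self[OF c] by (simp_all add: wedge_add_left wedge_scale_left)
    have "scaleE \<beta> (wedge x b) + scaleE \<gamma> (wedge x c) = 0"
      unfolding xb xc wedge_anticomm[OF c b]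
      by (rule ext) (simp only: plus_fun_apply scaleE_apply zero_fun_apply uminus_apply; algebra)
    then have "\<beta> = 0 \<and> \<gamma> = 0" using independent_pair_coeffs[OF ind(2,1)] by blast
    then show False using xe x(2) by (simp add: fun_eq_iff)
  qed
qed

lemma wedge_contract_remainder_zero:
  assumes x: "x \<in> grade 1" "eval_form \<psi> x = 1" and q: "q \<in> grade 2"
    and u: "u \<in> grade 1" "eval_form \<psi> u = 0" and z: "wedge (wedge x u) q = 0"
  shows "wedge (q - wedge x (contract \<psi> q)) u = 0"
proof -
  have iq: "contract \<psi> q \<in> grade 1" using contract_grade2[OF q] .
  have qu: "wedge q u = wedge u q" using wedge_grade1_grade2_commute[OF u(1) q] by simp
  have "0 = contract \<psi> (wedge x (wedge q u))"
    using z by (simp add: qu wedge_assoc)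
  also have "\<dots> = wedge q u - wedge x (contract \<psi> (wedge u q))"
    using contract_wedge_grade1[OF x(1) wedge_extAlg] x(2) qu by simp
  also have "contract \<psi> (wedge u q) = - wedge u (contract \<psi> q)"
    using contract_wedge_grade1[OF u(1) grade_extAlg[OF q]] u(2) by simp
  finally have "wedge q u - wedge x (- wedge u (contract \<psi> q)) = 0" by (rule sym)
  then have "wedge q u = - wedge x (wedge u (contract \<psi> q))"
    by (simp only: right_minus_eq wedge_minus_right)
  moreover have "wedge (contract \<psi> q) u = - wedge u (contract \<psi> q)"
    using wedge_anticomm[OF iq u(1)] .
  ultimately show ?thesis
    by (simp add: wedge_diff_left wedge_assoc wedge_minus_right)
qed

lemma wedge_in_line_if_annihilated:
  assumes x: "x \<in> grade 1" and b: "b \<in> grade 1" and c: "c \<in> grade 1"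
    and bc: "wedge b c \<noteq> 0" "x \<notin> E.span {b, c}" and q: "q \<in> grade 2"
    and z: "wedge (wedge x b) q = 0" "wedge (wedge x c) q = 0"
  shows "wedge x q \<in> E.span {wedge x (wedge b c)}"
proof -
  obtain \<psi> where \<psi>: "eval_form \<psi> x = 1" "eval_form \<psi> b = 0" "eval_form \<psi> c = 0"
    using exists_separating_form[OF x _ bc(2)] b c by auto
  define r where "r = q - wedge x (contract \<psi> q)"
  have r2: "r \<in> grade 2" unfolding r_def
    by (rule E.subspace_diff[OF grade_subspace q wedge_grade1_grade1[OF x contract_grade2[OF q]]])
  have rb: "wedge r b = 0" and rc: "wedge r c = 0"
    unfolding r_def using wedge_contract_remainder_zero[OF x \<psi>(1) q] b c \<psi>(2,3) z by auto
  have "b \<noteq> 0" using bc(1) by auto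
  then obtain m where m: "m \<in> grade 1" "r = wedge b m"
    using wedge_zero_divisible_grade2[OF b _ r2] rb wedge_grade1_grade2_commute[OF b r2] by auto
  have "m \<in> E.span {b, c}"
  proof (rule in_span_if_wedge_zero[OF m(1) _ wedge_extAlg bc(1)])
    show "{b, c} \<subseteq> grade 1" using b c by auto
    show "\<And>\<phi>. \<forall>s\<in>{b, c}. eval_form \<phi> s = 0 \<Longrightarrow> contract \<phi> (wedge b c) = 0"
      using contract_wedge_zero[OF b c] by simp
    have "wedge m (wedge b c) = wedge (wedge b c) m"
      using wedge_grade1_grade2_commute[OF m(1) wedge_grade1_grade1[OF b c]] by simp
    also have "\<dots> = - wedge r c"
      using m wedge_anticomm[OF c m(1)] by (simp add: wedge_assoc wedge_minus_right)
    finally show "wedge m (wedge b c) = 0" using rc by simp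
  qed
  then obtain \<beta> where "m - scaleE \<beta> b \<in> E.span {c}" using E.span_breakdown_eq by blast
  then obtain \<gamma> where "m - scaleE \<beta> b = scaleE \<gamma> c" using E.span_singleton by auto
  then have "m = scaleE \<beta> b + scaleE \<gamma> c" by (simp add: diff_eq_eq add.commute)
  then have "r = scaleE \<gamma> (wedge b c)"
    using m wedge_grade1_self[OF b] by (simp add: wedge_add_right wedge_scale_right)
  moreover have "wedge x q = wedge x r"
    using wedge_grade1_self_left[OF x] by (simp add: r_def wedge_diff_right)
  ultimately have "wedge x q = scaleE \<gamma> (wedge x (wedge b c))" by (simp add: wedge_scale_right)
  then show ?thesis by (simp add: E.span_scale E.span_base)
qed

lemma rank2_pencil_in_kernel:
  assumes W: "E.subspace W" "W \<subseteq> grade 2" and x: "x \<in> grade 1" "x \<noteq> 0"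
    and dim: "2 \<le> E.dim {q \<in> W. wedge x q = 0}"
  shows "\<exists>P. rank2_pencil P \<and> P \<subseteq> W"
proof -
  obtain q1 q2 where qq: "q1 \<in> W" "q2 \<in> W" "wedge x q1 = 0" "wedge x q2 = 0"
    "q1 \<noteq> q2" "\<not> E.dependent {q1, q2}"
    using independent_pair_exists[OF dim] by blast
  define P where "P = E.span {q1, q2}"
  have PW: "P \<subseteq> W" unfolding P_def using qq(1,2) by (intro E.span_minimal[OF _ W(1)]) auto
  have "E.dim P = 2" unfolding P_def E.dim_span_eq_card_independent[OF qq(6)] using qq(5) by simp
  moreover have "E.subspace P" unfolding P_def by (rule E.subspace_span)
  ultimately have pen: "pencil P" unfolding pencil_def using PW W(2) by blast
  have "rank2_quadric s" if s: "s \<in> P" "s \<noteq> 0" for s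
  proof -
    have s2: "s \<in> grade 2" using s PW W(2) by blast
    have "E.subspace {s. wedge x s = 0}"
      by (auto simp: E.subspace_def wedge_add_right wedge_scale_right)
    moreover have "{q1, q2} \<subseteq> {s. wedge x s = 0}" using qq(3,4) by auto
    ultimately have "P \<subseteq> {s. wedge x s = 0}" unfolding P_def by (intro E.span_minimal)
    then have "wedge x s = 0" using s(1) by blast
    then obtain m where m: "m \<in> grade 1" "s = wedge x m" using wedge_zero_divisible_grade2[OF x s2] by blast
    have mx: "m \<notin> E.span {x}"
    proof
      assume "m \<in> E.span {x}"
      then obtain \<beta> where "m = scaleE \<beta> x" using E.span_singleton by auto
      then show False using s(2) m wedge_grade1_self[OF x(1)] by (simp add: wedge_scale_right)
    qed
    moreover have "\<not> E.dependent {x}" using x(2) by simp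
    ultimately have "\<not> E.dependent (insert m {x})" by (rule E.independent_insertI)
    then have "\<not> E.dependent {x, m}" by (simp add: insert_commute)
    moreover have "x \<noteq> m" using mx E.span_base by blast
    ultimately show ?thesis unfolding rank2_quadric_def using x(1) m by blast
  qed
  then show ?thesis using pen PW by (auto simp: rank2_pencil_def)
qed

lemma rank2_pencil_if_squares_zero:
  assumes two: "(2::'a::field) \<noteq> 0"
    and W: "E.subspace W" "W \<subseteq> grade 2" "E.dim W = 3"
    and p: "p1 \<in> grade 2" "p2 \<in> grade 2" "p1 \<noteq> p2" "\<not> E.dependent {p1, p2}"
    and pq: "\<And>q. q \<in> W \<Longrightarrow> wedge p1 q = 0 \<and> wedge p2 q = (0::'a ext)"
    and sq: "wedge p1 p1 = 0" "wedge p2 p2 = 0" "wedge (p1 + p2) (p1 + p2) = 0"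
  shows "\<exists>P. rank2_pencil P \<and> P \<subseteq> W"
proof -
  have "p1 \<noteq> 0" "p2 \<noteq> 0" using p(4) E.dependent_zero[of "{p1, p2}"] by auto
  then obtain x b c where f: "x \<in> grade 1" "x \<noteq> 0" "b \<in> grade 1" "c \<in> grade 1"
    "p1 = wedge x b" "p2 = wedge x c"
    using pencil_common_factor[OF two p(1,2) _ _ sq] by metis
  have bc: "wedge b c \<noteq> 0" "x \<notin> E.span {b, c}"
    using wedge_factors_independent[OF f(1-4)] p(3,4) f(5,6) by simp_all
  have "wedge x ` W \<subseteq> E.span {wedge x (wedge b c)}"
    using wedge_in_line_if_annihilated[OF f(1,3,4) bc] pq W(2) f(5,6) by blast
  then have "E.dim (wedge x ` W) \<le> 1" using E.dim_le_card[of _ "{wedge x (wedge b c)}"] by fastforce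
  moreover have "E.dim W \<le> E.dim {q \<in> W. wedge x q = 0} + E.dim (wedge x ` W)"
    by (rule dim_le_kernel_plus_image[OF W(1) finite_monomials _ linear_wedge_right])
      (use W(2) grade_span in blast)
  ultimately show ?thesis using rank2_pencil_in_kernel[OF W(1,2) f(1,2)] W(3) by simp
qed

lemma subspace_homogeneous_ideal: "homogeneous_ideal I \<Longrightarrow> E.subspace I"
  unfolding homogeneous_ideal_def E.subspace_def by (auto simp: zero_fun_def plus_fun_def)

lemma homogeneous_ideal_wedge_left:
  "homogeneous_ideal I \<Longrightarrow> q \<in> I \<Longrightarrow> l \<in> extAlg \<Longrightarrow> wedge l q \<in> I"
  unfolding homogeneous_ideal_def by blast

lemma top_annihilator_ideal_wedge_eq_zero:
  assumes I: "homogeneous_ideal I" and p: "p \<in> top_annihilator (I \<inter> grade 3)"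
    and q: "q \<in> I \<inter> grade 2"
  shows "wedge p q = 0"
proof (rule wedge_top_annihilator_eq_zero[OF p])
  show "q \<in> grade 2" using q by simp
  fix l :: "'a ext" assume l: "l \<in> grade 1"
  then show "wedge l q \<in> I \<inter> grade 3"
    using homogeneous_ideal_wedge_left[OF I _ grade_extAlg[OF l]] wedge_grade1_grade2[OF l] q by blast
qed

lemma top_annihilator_grade: "top_annihilator T \<subseteq> grade 2"
  by (auto simp: top_annihilator_def)

lemma dim_homogeneous_ideal_grade:
  assumes "hilbert_fun I d = h" "0 < h"
  shows "E.dim (I \<inter> grade d :: 'a::field ext set) = (5 choose d) - h"
  using assms dim_grade[of d, where 'a='a] unfolding hilbert_fun_def by linarith

theorem lemma5p2:
  fixes I :: "'a::field ext set"
  assumes "alg_closed TYPE('a)"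
    and "(2::'a) \<noteq> 0"
    and "homogeneous_ideal I"
    and "hilbert_fun I 0 = 1" and "hilbert_fun I 1 = 5"
    and "hilbert_fun I 2 = 7" and "hilbert_fun I 3 = 2"
    and "\<forall>d\<ge>4. hilbert_fun I d = 0"
    and "\<not> (\<exists>P. rank2_pencil P \<and> P \<subseteq> I)"
  shows "\<exists>V. V \<subseteq> grade 1 \<and> module.subspace (scaleE :: 'a \<Rightarrow> _) V \<and>
             vector_space.dim (scaleE :: 'a \<Rightarrow> _) V = 4 \<and>
             I \<inter> grade 2 \<subseteq> wedge2 V"
proof -
  define W where "W = I \<inter> grade 2"
  define A where "A = top_annihilator (I \<inter> grade 3)"
  have W: "E.subspace W" "W \<subseteq> grade 2" "E.dim W = 3"
    using E.subspace_inter[OF subspace_homogeneous_ideal[OF assms(3)] grade_subspace]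
      dim_homogeneous_ideal_grade[OF assms(6)] choose_5 by (auto simp: W_def)
  have "2 \<le> E.dim A" using dim_top_annihilator[of "I \<inter> grade 3"]
      dim_homogeneous_ideal_grade[OF assms(7)] choose_5 by (simp add: A_def)
  then obtain p1 p2 where p: "p1 \<in> A" "p2 \<in> A" "p1 \<noteq> p2" "\<not> E.dependent {p1, p2}"
    by (rule independent_pair_exists)
  have A: "E.subspace A" "A \<subseteq> grade 2"
    unfolding A_def by (rule subspace_top_annihilator top_annihilator_grade)+
  have pq: "wedge p q = 0" if "p \<in> A" "q \<in> W" for p q
    using top_annihilator_ideal_wedge_eq_zero[OF assms(3)] that by (simp add: A_def W_def)
  show ?thesis
  proof (cases "\<exists>p\<in>A. wedge p p \<noteq> 0")
    case True
    then obtain p where "p \<in> A" "wedge p p \<noteq> 0" by blast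
    then show ?thesis
      using annihilated_in_wedge2_hyperplane[OF _ _ W(2) pq[OF \<open>p \<in> A\<close>]] A(2)
      unfolding W_def by blast
  next
    case False
    have "p1 + p2 \<in> A" using E.subspace_add[OF A(1) p(1,2)] .
    then have "\<exists>P. rank2_pencil P \<and> P \<subseteq> W"
      by (intro rank2_pencil_if_squares_zero[OF assms(2) W _ _ p(3,4)]) (use pq p A(2) False in auto)
    then show ?thesis using assms(9) by (auto simp: W_def)
  qed
qed

end
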